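(* In the setting of the context, there exist $s_{11}$ and a constant $C\ge1$ (depending only on $p,\mu,K$) such that for all $s\ge s_{11}$: (i) $R(\cdot,s)\in\vartheta_C(s)$ and $|R_2(s)|\le\frac{C}{s^{4\beta}}$; (ii) $\|V(\cdot,s)\|_{L^\infty(\mathbb{R})}\le C$ and $|V(y,s)|\le C\frac{1+|y|^2}{s^{2\beta}}$ for all $y\in\mathbb{R}$.
   Context: Let $p>3$, $\mu>0$, $q=\frac{2p}{p+1}$, $\beta=\frac{p+1}{2(p-1)}$, $\kappa=(p-1)^{-1/(p-1)}$, $b=\frac12(p-1)^{\frac{p-2}{p-1}}\left(\frac{(4\pi)^{1/2}(p+1)^2}{p\int_{\mathbb{R}}|y|^qe^{-y^2/4}dy}\right)^{\frac{p+1}{p-1}}\mu^{-\frac{p+1}{p-1}}$, $a_*=\frac{2b\kappa}{(p-1)^2}$, $\varphi(y,s)=(p-1+by^2s^{-2\beta})^{-\frac1{p-1}}+a_*s^{-2\beta}$, $V=p\varphi^{p-1}-\frac p{p-1}$, $R=\partial_y^2\varphi-\frac12y\partial_y\varphi-\frac{\varphi}{p-1}+\varphi^p-\partial_s\varphi+\mu|\partial_y\varphi|^q$. Let $\rho(y)=e^{-y^2/4}/\sqrt{4\pi}$, $h_0=1,h_1=y,h_2=y^2-2$, $k_m=h_m/\int h_m^2\rho$. Fix $\chi_0\in C^\infty([0,\infty),[0,1])$ nonincreasing, $=1$ on $[0,1]$, support in $[0,2]$, a fixed constant $K\ge6$, $\chi(y,s)=\chi_0(|y|/(Ks^\beta))$.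 For $r\in L^\infty(\mathbb{R})$ at time $s$: $r_b=\chi(\cdot,s)r$, $r_e=(1-\chi(\cdot,s))r$, $r_m=\int r_bk_m\rho$ ($m=0,1,2$), $r_-=r_b-\sum_{m=0}^2r_mh_m$. Fix $\gamma$ with $3\beta<\gamma<\min(5\beta-1,2\beta+1)$. For $A\ge1$, $s\ge1$, $\vartheta_A(s)$ is the set of $r\in L^\infty(\mathbb{R})$ with $\|r_e\|_{L^\infty}\le A^2s^{-(\gamma-3\beta)}$, $\|r_-(y)/(1+|y|^3)\|_{L^\infty}\le As^{-\gamma}$, $|r_0|,|r_1|\le As^{-(2\beta+1)}$, $|r_2|\le\sqrt As^{-(4\beta-1)}$. *)

theory Defs
  imports "HOL-Analysis.Analysis"
begin

definition qexp :: "real \<Rightarrow> real" where "qexp p = 2 * p / (p + 1)"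
definition betaexp :: "real \<Rightarrow> real" where "betaexp p = (p + 1) / (2 * (p - 1))"
definition kappa :: "real \<Rightarrow> real" where "kappa p = (p - 1) powr (- 1 / (p - 1))"

definition bconst :: "real \<Rightarrow> real \<Rightarrow> real" where
  "bconst p mu = 1/2 * (p - 1) powr ((p - 2) / (p - 1)) *
     ((sqrt (4 * pi) * (p + 1)^2 /
        (p * (LINT y|lborel. \<bar>y\<bar> powr (qexp p) * exp (- (y^2) / 4))))
       powr ((p + 1) / (p - 1))) * mu powr (- (p + 1) / (p - 1))"

definition astar :: "real \<Rightarrow> real \<Rightarrow> real" where
  "astar p mu = 2 * bconst p mu * kappa p / (p - 1)^2"

definition phi :: "real \<Rightarrow> real \<Rightarrow> real \<Rightarrow> real \<Rightarrow> real" where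
  "phi p mu y s = (p - 1 + bconst p mu * y^2 * s powr (- 2 * betaexp p)) powr (- 1 / (p - 1))
                  + astar p mu * s powr (- 2 * betaexp p)"

definition Vpot :: "real \<Rightarrow> real \<Rightarrow> real \<Rightarrow> real \<Rightarrow> real" where
  "Vpot p mu y s = p * (phi p mu y s) powr (p - 1) - p / (p - 1)"

definition Rerr :: "real \<Rightarrow> real \<Rightarrow> real \<Rightarrow> real \<Rightarrow> real" where
  "Rerr p mu y s =
     deriv (\<lambda>z. deriv (\<lambda>w. phi p mu w s) z) y
     - y / 2 * deriv (\<lambda>w. phi p mu w s) y
     - phi p mu y s / (p - 1)
     + (phi p mu y s) powr p
     - deriv (\<lambda>t. phi p mu y t) s
     + mu * \<bar>deriv (\<lambda>w. phi p mu w s) y\<bar> powr (qexp p)"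

definition rho :: "real \<Rightarrow> real" where "rho y = exp (- (y^2) / 4) / sqrt (4 * pi)"

fun herm :: "nat \<Rightarrow> real \<Rightarrow> real" where
  "herm 0 y = 1"
| "herm (Suc 0) y = y"
| "herm (Suc (Suc 0)) y = y^2 - 2"
| "herm _ y = 0"

definition kherm :: "nat \<Rightarrow> real \<Rightarrow> real" where
  "kherm m y = herm m y / (LINT z|lborel. (herm m z)^2 * rho z)"

definition smooth_real :: "(real \<Rightarrow> real) \<Rightarrow> bool" where
  "smooth_real f \<longleftrightarrow> (\<forall>n. ((deriv ^^ n) f) differentiable_on UNIV)"

definition cutoff :: "(real \<Rightarrow> real) \<Rightarrow> real \<Rightarrow> real \<Rightarrow> real \<Rightarrow> real \<Rightarrow> real" where
  "cutoff chi0 K p y s = chi0 (\<bar>y\<bar> / (K * s powr betaexp p))"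

definition rpart_b :: "(real \<Rightarrow> real) \<Rightarrow> real \<Rightarrow> real \<Rightarrow> real \<Rightarrow> (real \<Rightarrow> real) \<Rightarrow> real \<Rightarrow> real" where
  "rpart_b chi0 K p s r y = cutoff chi0 K p y s * r y"

definition rpart_e :: "(real \<Rightarrow> real) \<Rightarrow> real \<Rightarrow> real \<Rightarrow> real \<Rightarrow> (real \<Rightarrow> real) \<Rightarrow> real \<Rightarrow> real" where
  "rpart_e chi0 K p s r y = (1 - cutoff chi0 K p y s) * r y"

definition rcoef :: "(real \<Rightarrow> real) \<Rightarrow> real \<Rightarrow> real \<Rightarrow> real \<Rightarrow> (real \<Rightarrow> real) \<Rightarrow> nat \<Rightarrow> real" where
  "rcoef chi0 K p s r m = (LINT y|lborel. rpart_b chi0 K p s r y * kherm m y * rho y)"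

definition rpart_minus :: "(real \<Rightarrow> real) \<Rightarrow> real \<Rightarrow> real \<Rightarrow> real \<Rightarrow> (real \<Rightarrow> real) \<Rightarrow> real \<Rightarrow> real" where
  "rpart_minus chi0 K p s r y =
     rpart_b chi0 K p s r y - (\<Sum>m\<le>2. rcoef chi0 K p s r m * herm m y)"

definition Linf :: "(real \<Rightarrow> real) \<Rightarrow> bool" where
  "Linf f \<longleftrightarrow> f \<in> borel_measurable lborel \<and> (\<exists>M. AE y in lborel. \<bar>f y\<bar> \<le> M)"

definition Linf_le :: "(real \<Rightarrow> real) \<Rightarrow> real \<Rightarrow> bool" where
  "Linf_le f c \<longleftrightarrow> (AE y in lborel. \<bar>f y\<bar> \<le> c)"

definition vartheta ::
  "(real \<Rightarrow> real) \<Rightarrow> real \<Rightarrow> real \<Rightarrow> real \<Rightarrow> real \<Rightarrow> real \<Rightarrow> (real \<Rightarrow> real) set" where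
  "vartheta chi0 K p gam A s = {r. Linf r \<and>
      Linf_le (rpart_e chi0 K p s r) (A^2 * s powr (- (gam - 3 * betaexp p))) \<and>
      Linf_le (\<lambda>y. rpart_minus chi0 K p s r y / (1 + \<bar>y\<bar>^3)) (A * s powr (- gam)) \<and>
      \<bar>rcoef chi0 K p s r 0\<bar> \<le> A * s powr (- (2 * betaexp p + 1)) \<and>
      \<bar>rcoef chi0 K p s r 1\<bar> \<le> A * s powr (- (2 * betaexp p + 1)) \<and>
      \<bar>rcoef chi0 K p s r 2\<bar> \<le> sqrt A * s powr (- (4 * betaexp p - 1))}"

end

theory Submission
  imports Defs "HOL-Probability.Probability" "HOL-Real_Asymp.Real_Asymp"
begin

(* The profile phi is explicit, so the error R can be computed in closed form. Writing
   G = p - 1 + b y^2 s^(-2 beta), tau = s^(-(2 beta + 1)) and sigma = s^(-2 beta), the terms of R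
   regroup as R = tau M + E with M y = a (2 beta - beta y^2) + mu a^q |y|^q and
   |E| <= C sigma^2 (1 + y^2 + y^4 / s), the remainder coming from Lipschitz bounds for powers of G
   and a second order Taylor expansion of phi^p. Independently, every term of R is bounded by C / s
   uniformly in y, because the factors y^2 sigma that appear are compensated by powers of G.

   Projecting onto the Hermite modes, r_0 and r_1 are O(tau). The constant b is chosen precisely so
   that the Gaussian integral of M h_2 vanishes (an integration by parts for the moment of y^2 |y|^q),
   so r_2 only sees E and the part of tau M removed by the cut-off, where y^2 >= K^2 s^(2 beta): both
   are O(sigma^2) = O(s^(-4 beta)). On the support of the cut-off |y| <= 2 K s^beta, which turns
   y^4 / s into O(s^(beta - 1)) |y|^3 and gives the weighted bound on r_-. The bounds on V follow
   from the same Taylor and Lipschitz estimates applied to phi^(p-1). *)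

lemma powr_diff_mean_value:
  fixes x y r :: real
  assumes "0 < x" "x \<le> y"
  obtains z where "x \<le> z" "z \<le> y" "y powr r - x powr r = (y - x) * (r * z powr (r - 1))"
proof (cases "x = y")
  case True
  with that show ?thesis by auto
next
  case False
  with assms have "x < y" by simp
  have "\<exists>z. x < z \<and> z < y \<and> y powr r - x powr r = (y - x) * (r * z powr (r - 1))"
    by (rule MVT2[OF \<open>x < y\<close>]) (use assms in \<open>auto intro!: has_real_derivative_powr\<close>)
  with that show ?thesis by (auto intro: less_imp_le)
qed

lemma abs_powr_neg_diff_le:
  fixes c w r :: real
  assumes "0 < c" "0 \<le> w" "0 \<le> r"
  shows "\<bar>(c + w) powr (- r) - c powr (- r)\<bar> \<le> r * c powr (- r - 1) * w"
proof -
  obtain z where z: "c \<le> z" "z \<le> c + w" "(c + w) powr (- r) - c powr (- r) = w * (- r * z powr (- r - 1))"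
    using powr_diff_mean_value[of c "c + w" "- r"] assms by auto
  have "z powr (- r - 1) \<le> c powr (- r - 1)"
    using z assms by (intro powr_mono2') auto
  then have "\<bar>w * (- r * z powr (- r - 1))\<bar> \<le> w * (r * c powr (- r - 1))"
    using assms by (auto simp: abs_mult intro!: mult_left_mono)
  with z show ?thesis by (simp add: algebra_simps)
qed

lemma powr_diff_le:
  fixes x y r :: real
  assumes "0 < x" "x \<le> y" "1 \<le> r"
  shows "0 \<le> y powr r - x powr r" "y powr r - x powr r \<le> (y - x) * r * y powr (r - 1)"
proof -
  obtain z where z: "x \<le> z" "z \<le> y" "y powr r - x powr r = (y - x) * (r * z powr (r - 1))"
    using powr_diff_mean_value[of x y r] assms by auto
  have "z powr (r - 1) \<le> y powr (r - 1)"
    using z assms by (intro powr_mono2) auto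
  then have "(y - x) * (r * z powr (r - 1)) \<le> (y - x) * (r * y powr (r - 1))"
    using assms by (intro mult_left_mono) auto
  moreover have "0 \<le> (y - x) * (r * z powr (r - 1))"
    using assms by auto
  ultimately show "0 \<le> y powr r - x powr r" "y powr r - x powr r \<le> (y - x) * r * y powr (r - 1)"
    using z by (simp_all add: algebra_simps)
qed

lemma abs_powr_taylor2_le:
  fixes x e p :: real
  assumes "0 < x" "0 \<le> e" "2 \<le> p"
  shows "\<bar>(x + e) powr p - x powr p - p * x powr (p - 1) * e\<bar>
           \<le> p * (p - 1) * (x + e) powr (p - 2) * e^2"
proof -
  obtain z where z: "x \<le> z" "z \<le> x + e" "(x + e) powr p - x powr p = e * (p * z powr (p - 1))"
    using powr_diff_mean_value[of x "x + e" p] assms by auto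
  have "z powr (p - 1 - 1) \<le> (x + e) powr (p - 2)"
    using z assms by (auto intro: powr_mono2)
  then have "(z - x) * (p - 1) * z powr (p - 1 - 1) \<le> e * (p - 1) * (x + e) powr (p - 2)"
    using z assms by (intro mult_mono) auto
  moreover have "0 \<le> z powr (p - 1) - x powr (p - 1)"
    "z powr (p - 1) - x powr (p - 1) \<le> (z - x) * (p - 1) * z powr (p - 1 - 1)"
    using powr_diff_le[of x z "p - 1"] assms z by auto
  ultimately have inner: "\<bar>z powr (p - 1) - x powr (p - 1)\<bar> \<le> e * (p - 1) * (x + e) powr (p - 2)"
    by linarith
  have "(x + e) powr p - x powr p - p * x powr (p - 1) * e = e * p * (z powr (p - 1) - x powr (p - 1))"
    using z by (simp add: algebra_simps)
  then have "\<bar>(x + e) powr p - x powr p - p * x powr (p - 1) * e\<bar>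
          = e * p * \<bar>z powr (p - 1) - x powr (p - 1)\<bar>"
    using assms by (simp add: abs_mult)
  also have "\<dots> \<le> e * p * (e * (p - 1) * (x + e) powr (p - 2))"
    using inner assms by (intro mult_left_mono) auto
  finally show ?thesis
    by (simp add: power2_eq_square algebra_simps)
qed

lemma abs_power_le_1_plus_power:
  fixes y :: real
  assumes "m \<le> n"
  shows "\<bar>y\<bar> ^ m \<le> 1 + \<bar>y\<bar> ^ n"
proof (cases "\<bar>y\<bar> \<le> 1")
  case True
  then have "\<bar>y\<bar> ^ m \<le> 1" by (simp add: power_le_one)
  then show ?thesis by (smt (verit) zero_le_power abs_ge_zero)
next
  case False
  with assms have "\<bar>y\<bar> ^ m \<le> \<bar>y\<bar> ^ n" by (intro power_increasing) auto
  then show ?thesis by simp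
qed

lemma abs_powr_le_1_plus_sq:
  fixes y q :: real
  assumes "0 \<le> q" "q \<le> 2"
  shows "\<bar>y\<bar> powr q \<le> 1 + y^2"
proof (cases "\<bar>y\<bar> \<le> 1")
  case True
  with assms have "\<bar>y\<bar> powr q \<le> 1" by (intro powr_le1) auto
  then show ?thesis by (smt (verit) zero_le_power2)
next
  case False
  with assms have "\<bar>y\<bar> powr q \<le> \<bar>y\<bar> powr 2" by (intro powr_mono) auto
  with False show ?thesis by (simp add: powr_numeral)
qed

lemma power_le_1_plus_power6:
  fixes y :: real
  shows "y^2 \<le> 1 + y^6" "y^4 \<le> 1 + y^6" "\<bar>y\<bar> \<le> 1 + y^6" "\<bar>y\<bar>^3 \<le> 1 + y^6"
  using abs_power_le_1_plus_power[of 2 6 y] abs_power_le_1_plus_power[of 4 6 y]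
    abs_power_le_1_plus_power[of 1 6 y] abs_power_le_1_plus_power[of 3 6 y]
  by (simp_all add: power_even_abs_numeral)

lemma poly_products_le_1_plus_power6:
  fixes y :: real
  shows "(1 + y^4) * (1 + y^2) \<le> 4 * (1 + y^6)"
    and "(1 + y^2) * (1 + y^2) \<le> 4 * (1 + y^6)"
    and "y^2 * (1 + y^2) \<le> 2 * (1 + y^4)"
proof -
  have bounds: "0 \<le> y^2" "0 \<le> y^4" "0 \<le> y^6" "y^2 \<le> 1 + y^4"
    using abs_power_le_1_plus_power[of 2 4 y] by simp_all
  have "(1 + y^4) * (1 + y^2) = 1 + y^2 + y^4 + y^6" by algebra
  also have "\<dots> \<le> 4 * (1 + y^6)"
    using bounds power_le_1_plus_power6(1,2)[of y] by (smt (verit))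
  finally show "(1 + y^4) * (1 + y^2) \<le> 4 * (1 + y^6)" .
  have "(1 + y^2) * (1 + y^2) = 1 + 2 * y^2 + y^4" by algebra
  also have "\<dots> \<le> 4 * (1 + y^6)"
    using bounds power_le_1_plus_power6(1,2)[of y] by (smt (verit))
  finally show "(1 + y^2) * (1 + y^2) \<le> 4 * (1 + y^6)" .
  have "y^2 * (1 + y^2) = y^2 + y^4" by algebra
  also have "\<dots> \<le> 2 * (1 + y^4)"
    using bounds by (smt (verit))
  finally show "y^2 * (1 + y^2) \<le> 2 * (1 + y^4)" .
qed

lemma one_plus_sq_le:
  fixes y :: real
  shows "1 + y^2 \<le> 2 * (1 + y^4)" "1 + y^2 \<le> 2 * (1 + \<bar>y\<bar>^3)"
proof -
  have "y^2 \<le> 1 + y^4" "0 \<le> y^4" "y^2 \<le> 1 + \<bar>y\<bar>^3" "0 \<le> \<bar>y\<bar>^3"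
    using abs_power_le_1_plus_power[of 2 4 y] abs_power_le_1_plus_power[of 2 3 y] by simp_all
  then show "1 + y^2 \<le> 2 * (1 + y^4)" "1 + y^2 \<le> 2 * (1 + \<bar>y\<bar>^3)"
    by (smt (verit))+
qed

section \<open>The Gaussian weight and the Hermite polynomials\<close>

lemma rho_eq_normal_density: "rho y = normal_density 0 (sqrt 2) y"
  by (simp add: rho_def normal_density_def real_sqrt_mult)

lemma rho_pos: "rho y > 0"
  by (simp add: rho_def)

lemma borel_measurable_rho [measurable]: "rho \<in> borel_measurable borel"
  unfolding rho_def[abs_def] by measurable

lemma integrable_rho_power: "integrable lborel (\<lambda>y. rho y * y ^ k)"
  using integrable_normal_moment[where \<mu>=0 and \<sigma>="sqrt 2" and k=k]
  by (simp add: rho_eq_normal_density[abs_def])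

lemma integral_rho: "(LINT y|lborel. rho y) = 1"
  using integral_normal_density[of 0 "sqrt 2"] by (simp add: rho_eq_normal_density[abs_def])

lemma integral_rho_power_even: "(LINT y|lborel. rho y * y ^ (2 * k)) = fact (2 * k) / fact k"
  using integral_normal_moment_even[of "sqrt 2" 0 k] by (simp add: rho_eq_normal_density[abs_def])

lemma integral_rho_power2: "(LINT y|lborel. rho y * y^2) = 2"
  using integral_rho_power_even[of 1] by simp

lemma integral_rho_power4: "(LINT y|lborel. rho y * y^4) = 12"
  using integral_rho_power_even[of 2] by (simp add: fact_numeral)

lemma integrable_if_le_power6_rho:
  fixes f :: "real \<Rightarrow> real"
  assumes "f \<in> borel_measurable lborel" "\<And>y. \<bar>f y\<bar> \<le> c * ((1 + y^6) * rho y)"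
  shows "integrable lborel f"
proof (rule Bochner_Integration.integrable_bound)
  show "integrable lborel (\<lambda>y. c * (rho y + rho y * y^6))"
    using integrable_rho_power[of 0] integrable_rho_power[of 6] by simp
  show "AE y in lborel. norm (f y) \<le> norm (c * (rho y + rho y * y^6))"
    using assms(2) by (intro AE_I2) (auto simp: algebra_simps intro: order_trans[OF _ abs_ge_self])
qed fact

lemma continuous_on_abs_powr: "0 < q \<Longrightarrow> continuous_on UNIV (\<lambda>y::real. \<bar>y\<bar> powr q)"
  by (intro continuous_on_powr') (auto intro: continuous_intros)

lemma has_real_derivative_times_abs_powr:
  fixes q :: real
  assumes q: "q > 0"
  shows "((\<lambda>y. y * \<bar>y\<bar> powr q) has_real_derivative (q + 1) * \<bar>y\<bar> powr q) (at y)"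
proof (cases "y = 0")
  case False
  have abs_powr_eq: "\<bar>x\<bar> powr q = (x^2) powr (q/2)" for x :: real
  proof -
    have "\<bar>x\<bar> powr q = (\<bar>x\<bar> powr 2) powr (q/2)"
      by (simp only: powr_powr) simp
    also have "\<bar>x\<bar> powr 2 = x^2"
      by (simp add: powr_numeral)
    finally show ?thesis .
  qed
  have "((\<lambda>y. (y^2) powr (q/2)) has_real_derivative (q/2) * (y^2) powr (q/2 - 1) * (2 * y)) (at y)"
    using DERIV_fun_powr[of "\<lambda>y. y^2" "2 * y" y "q/2"] False
    by (auto intro!: derivative_eq_intros)
  from DERIV_mult[OF DERIV_ident this]
  have "((\<lambda>y. y * (y^2) powr (q/2)) has_real_derivative
      1 * (y^2) powr (q/2) + y * ((q/2) * (y^2) powr (q/2 - 1) * (2 * y))) (at y)"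
    by (simp add: algebra_simps)
  moreover have "y * ((q/2) * (y^2) powr (q/2 - 1) * (2 * y)) = q * ((y^2) powr 1 * (y^2) powr (q/2 - 1))"
    using False by (simp add: power2_eq_square algebra_simps)
  moreover have "(y^2) powr 1 * (y^2) powr (q/2 - 1) = (y^2) powr (q/2)"
    using powr_add[of "y^2" 1 "q/2 - 1"] by simp
  ultimately have "((\<lambda>y. y * (y^2) powr (q/2)) has_real_derivative (q + 1) * (y^2) powr (q/2)) (at y)"
    by (simp only:) (simp add: algebra_simps)
  then show ?thesis
    unfolding abs_powr_eq .
next
  case True
  have "isCont (\<lambda>y::real. \<bar>y\<bar> powr q) 0"
    using continuous_on_abs_powr[OF q] by (simp add: continuous_on_eq_continuous_at)
  then have "((\<lambda>x::real. \<bar>x\<bar> powr q) \<longlongrightarrow> 0) (at 0)"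
    using q by (simp add: isCont_def)
  moreover have "\<forall>\<^sub>F x in at (0::real). \<bar>x\<bar> powr q = (x * \<bar>x\<bar> powr q - 0 * \<bar>0\<bar> powr q) / (x - 0)"
    by (auto simp: eventually_at_filter)
  ultimately have "((\<lambda>x::real. (x * \<bar>x\<bar> powr q - 0 * \<bar>0\<bar> powr q) / (x - 0)) \<longlongrightarrow> 0) (at 0)"
    by (rule Lim_transform_eventually)
  then show ?thesis
    unfolding True has_field_derivative_iff using q by simp
qed

lemma has_real_derivative_rho: "(rho has_real_derivative (- y / 2 * rho y)) (at y)"
  unfolding rho_def[abs_def] by (auto intro!: derivative_eq_intros simp: field_simps)

lemma integrable_abs_powr_rho:
  assumes "0 \<le> q" "q \<le> 2"
  shows "integrable lborel (\<lambda>y. \<bar>y\<bar> powr q * rho y)"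
proof (rule integrable_if_le_power6_rho[where c=2])
  fix y :: real
  have "0 \<le> y^6" by simp
  then have "\<bar>y\<bar> powr q \<le> 2 * (1 + y^6)"
    using abs_powr_le_1_plus_sq[OF assms, of y] power_le_1_plus_power6(1)[of y] by (smt (verit))
  then show "\<bar>\<bar>y\<bar> powr q * rho y\<bar> \<le> 2 * ((1 + y^6) * rho y)"
    using rho_pos[of y] by (simp add: abs_mult mult_right_mono mult.assoc)
qed measurable

lemma integrable_sq_abs_powr_rho:
  assumes "0 \<le> q" "q \<le> 2"
  shows "integrable lborel (\<lambda>y. y^2 * \<bar>y\<bar> powr q * rho y)"
proof (rule integrable_if_le_power6_rho[where c=4])
  fix y :: real
  have "0 \<le> y^6" by simp
  have "y^2 * \<bar>y\<bar> powr q \<le> y^2 * (1 + y^2)"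
    using abs_powr_le_1_plus_sq[OF assms, of y] by (intro mult_left_mono) auto
  also have "\<dots> = y^2 + y^4" by algebra
  also have "\<dots> \<le> 4 * (1 + y^6)"
    using power_le_1_plus_power6(1,2)[of y] \<open>0 \<le> y^6\<close> by (smt (verit))
  finally show "\<bar>y^2 * \<bar>y\<bar> powr q * rho y\<bar> \<le> 4 * ((1 + y^6) * rho y)"
    using rho_pos[of y] by (simp add: abs_mult mult_right_mono mult.assoc)
qed measurable

lemma times_abs_powr_rho_tendsto_0:
  assumes "0 < q" "q \<le> 2"
  shows "((\<lambda>y. y * \<bar>y\<bar> powr q * rho y) \<longlongrightarrow> 0) at_top"
    and "((\<lambda>y. y * \<bar>y\<bar> powr q * rho y) \<longlongrightarrow> 0) at_bot"
proof -
  have bound: "\<bar>y * \<bar>y\<bar> powr q * rho y\<bar> \<le> 2 * ((1 + y^4) * rho y)" for y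
  proof -
    have "\<bar>y\<bar> * \<bar>y\<bar> powr q \<le> \<bar>y\<bar> * (1 + y^2)"
      using abs_powr_le_1_plus_sq[of q y] assms by (intro mult_left_mono) auto
    also have "\<dots> = \<bar>y\<bar> + \<bar>y\<bar>^3"
      by (simp add: algebra_simps power2_eq_square power3_eq_cube)
    also have "\<dots> \<le> 2 * (1 + y^4)"
      using abs_power_le_1_plus_power[of 1 4 y] abs_power_le_1_plus_power[of 3 4 y]
      by (simp add: power_even_abs_numeral)
    finally show ?thesis
      using rho_pos[of y] by (simp add: abs_mult mult_right_mono mult.assoc)
  qed
  have "((\<lambda>y. 2 * ((1 + y^4) * rho y)) \<longlongrightarrow> 0) at_top"
    "((\<lambda>y. 2 * ((1 + y^4) * rho y)) \<longlongrightarrow> 0) at_bot"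
    unfolding rho_def by real_asymp+
  then show "((\<lambda>y. y * \<bar>y\<bar> powr q * rho y) \<longlongrightarrow> 0) at_top"
    "((\<lambda>y. y * \<bar>y\<bar> powr q * rho y) \<longlongrightarrow> 0) at_bot"
    using Lim_null_comparison[of "\<lambda>y. y * \<bar>y\<bar> powr q * rho y" "\<lambda>y. 2 * ((1 + y^4) * rho y)"] bound
    by (auto intro: always_eventually)
qed

text \<open>Integration by parts against the Gaussian, with \<open>y |y|^q \<rho>\<close> as the boundary term.\<close>
lemma integral_sq_abs_powr_rho:
  assumes q: "0 < q" "q \<le> 2"
  shows "(LINT y|lborel. y^2 * \<bar>y\<bar> powr q * rho y) = 2 * (q + 1) * (LINT y|lborel. \<bar>y\<bar> powr q * rho y)"
proof -
  define F where "F y = y * \<bar>y\<bar> powr q * rho y" for y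
  define f where "f y = (q + 1) * (\<bar>y\<bar> powr q * rho y) - (1/2) * (y^2 * \<bar>y\<bar> powr q * rho y)" for y
  have i1: "integrable lborel (\<lambda>y. \<bar>y\<bar> powr q * rho y)"
    and i2: "integrable lborel (\<lambda>y. y^2 * \<bar>y\<bar> powr q * rho y)"
    using integrable_abs_powr_rho integrable_sq_abs_powr_rho q by auto
  have "(LBINT x=-\<infinity>..\<infinity>. f x) = 0 - 0"
  proof (rule interval_integral_FTC_integrable)
    show "- \<infinity> < (\<infinity>::ereal)" by simp
    show "(F has_vector_derivative f x) (at x)" for x
      using DERIV_mult[OF has_real_derivative_times_abs_powr[OF q(1)] has_real_derivative_rho]
      unfolding F_def[abs_def] f_def has_real_derivative_iff_has_vector_derivative[symmetric]
      by (simp add: power2_eq_square algebra_simps)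
    have "continuous_on UNIV f"
      unfolding f_def[abs_def] rho_def
      by (intro continuous_intros continuous_on_abs_powr[OF q(1)]) auto
    then show "isCont f x" for x
      by (simp add: continuous_on_eq_continuous_at)
    show "set_integrable lborel (einterval (- \<infinity>) \<infinity>) f"
      using i1 i2 by (simp add: einterval_eq_UNIV set_integrable_def f_def)
    have "(F \<longlongrightarrow> 0) at_top" "(F \<longlongrightarrow> 0) at_bot"
      unfolding F_def[abs_def] using times_abs_powr_rho_tendsto_0 q by auto
    then show "((F \<circ> real_of_ereal) \<longlongrightarrow> 0) (at_right (- \<infinity>))"
      "((F \<circ> real_of_ereal) \<longlongrightarrow> 0) (at_left \<infinity>)"
      by (simp_all add: ereal_tendsto_simps1)
  qed
  then have "(q + 1) * (LINT y|lborel. \<bar>y\<bar> powr q * rho y)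
               - (1/2) * (LINT y|lborel. y^2 * \<bar>y\<bar> powr q * rho y) = 0"
    using i1 i2
    by (simp add: interval_lebesgue_integral_def einterval_eq_UNIV set_lebesgue_integral_def f_def)
  then show ?thesis by (simp add: algebra_simps)
qed

lemma herm_eq: "herm m y = (if m = 0 then 1 else if m = 1 then y else if m = 2 then y^2 - 2 else 0)"
  by (induction m y rule: herm.induct) auto

lemma abs_herm_le: "\<bar>herm m y\<bar> \<le> 2 * (1 + y^2)"
  using abs_power_le_1_plus_power[of 1 2 y] by (auto simp: herm_eq abs_le_iff)

lemma abs_mult_herm_le: "\<bar>c\<bar> \<le> C \<Longrightarrow> \<bar>c * herm m y\<bar> \<le> C * (4 * (1 + \<bar>y\<bar>^3))"
  using abs_herm_le[of m y] one_plus_sq_le(2)[of y]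
  by (simp add: abs_mult) (smt (verit) abs_ge_zero mult_mono)

lemma borel_measurable_herm [measurable]: "herm m \<in> borel_measurable borel"
  unfolding herm_eq[abs_def] by measurable

lemma borel_measurable_kherm [measurable]: "kherm m \<in> borel_measurable borel"
  unfolding kherm_def[abs_def] by measurable

lemma abs_kherm_le: "\<bar>kherm m y\<bar> \<le> 2 * \<bar>1 / (LINT z|lborel. (herm m z)^2 * rho z)\<bar> * (1 + y^2)"
proof -
  define N where "N = (LINT z|lborel. (herm m z)^2 * rho z)"
  have "\<bar>kherm m y\<bar> = \<bar>1 / N\<bar> * \<bar>herm m y\<bar>"
    by (simp add: kherm_def N_def abs_divide)
  also have "\<dots> \<le> \<bar>1 / N\<bar> * (2 * (1 + y^2))"
    using abs_herm_le by (intro mult_left_mono) auto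
  finally show ?thesis
    by (simp add: N_def mult_ac)
qed

definition kherm_weight :: "nat \<Rightarrow> real" where
  "kherm_weight m = (LINT y|lborel. (1 + y^4) * \<bar>kherm m y\<bar> * rho y)"

lemma kherm_weight_nonneg: "kherm_weight m \<ge> 0"
  unfolding kherm_weight_def using rho_pos by (auto intro!: integral_nonneg_AE AE_I2 simp: less_imp_le)

lemma integrable_power4_kherm_rho: "integrable lborel (\<lambda>y. (1 + y^4) * \<bar>kherm m y\<bar> * rho y)"
proof (rule integrable_if_le_power6_rho)
  define c where "c = 2 * \<bar>1 / (LINT z|lborel. (herm m z)^2 * rho z)\<bar>"
  have c: "0 \<le> c" by (simp add: c_def)
  fix y :: real
  have "(1 + y^4) * \<bar>kherm m y\<bar> \<le> (1 + y^4) * (c * (1 + y^2))"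
    using abs_kherm_le[of m y] unfolding c_def by (intro mult_left_mono) auto
  also have "\<dots> = c * ((1 + y^4) * (1 + y^2))"
    by (simp add: mult_ac)
  also have "\<dots> \<le> c * (4 * (1 + y^6))"
    using poly_products_le_1_plus_power6(1)[of y] c by (intro mult_left_mono)
  finally have "(1 + y^4) * \<bar>kherm m y\<bar> * rho y \<le> c * (4 * (1 + y^6)) * rho y"
    using rho_pos[of y] by (intro mult_right_mono) auto
  then show "\<bar>(1 + y^4) * \<bar>kherm m y\<bar> * rho y\<bar> \<le> (4 * c) * ((1 + y^6) * rho y)"
    using rho_pos[of y] by (simp add: abs_mult mult_ac)
qed measurable

lemma abs_integral_kherm_rho_le:
  fixes g :: "real \<Rightarrow> real"
  assumes g: "g \<in> borel_measurable lborel" "\<And>y. \<bar>g y\<bar> \<le> c * (1 + y^4)"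
  shows "integrable lborel (\<lambda>y. g y * kherm m y * rho y)"
    and "\<bar>LINT y|lborel. g y * kherm m y * rho y\<bar> \<le> c * kherm_weight m"
proof -
  have bound: "\<bar>g y * kherm m y * rho y\<bar> \<le> c * ((1 + y^4) * \<bar>kherm m y\<bar> * rho y)" for y
  proof -
    have "\<bar>g y\<bar> * (\<bar>kherm m y\<bar> * rho y) \<le> c * (1 + y^4) * (\<bar>kherm m y\<bar> * rho y)"
      using g(2)[of y] rho_pos[of y] by (intro mult_right_mono) auto
    then show ?thesis
      using rho_pos[of y] by (simp add: abs_mult mult_ac)
  qed
  show int: "integrable lborel (\<lambda>y. g y * kherm m y * rho y)"
  proof (rule Bochner_Integration.integrable_bound)
    show "integrable lborel (\<lambda>y. c * ((1 + y^4) * \<bar>kherm m y\<bar> * rho y))"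
      using integrable_power4_kherm_rho[of m] by simp
    show "AE y in lborel. norm (g y * kherm m y * rho y)
            \<le> norm (c * ((1 + y^4) * \<bar>kherm m y\<bar> * rho y))"
      using bound by (intro AE_I2) (auto intro: order_trans[OF _ abs_ge_self])
  qed (use g(1) in measurable)
  have "\<bar>LINT y|lborel. g y * kherm m y * rho y\<bar> \<le> (LINT y|lborel. \<bar>g y * kherm m y * rho y\<bar>)"
    using integral_norm_bound[of lborel "\<lambda>y. g y * kherm m y * rho y"] by simp
  also have "\<dots> \<le> (LINT y|lborel. c * ((1 + y^4) * \<bar>kherm m y\<bar> * rho y))"
    using int integrable_power4_kherm_rho[of m] bound by (intro integral_mono) auto
  finally show "\<bar>LINT y|lborel. g y * kherm m y * rho y\<bar> \<le> c * kherm_weight m"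
    by (simp add: kherm_weight_def)
qed

section \<open>The approximate profile and its error\<close>

locale blowup_profile =
  fixes p mu :: real
  assumes p_gt_3: "p > 3" and mu_pos: "mu > 0"
begin

abbreviation "q \<equiv> qexp p"
abbreviation "\<beta> \<equiv> betaexp p"
abbreviation "b \<equiv> bconst p mu"
abbreviation "a \<equiv> astar p mu"
abbreviation "\<kappa> \<equiv> kappa p"

definition "\<alpha> = 1 / (p - 1)"

lemma alpha_pos: "\<alpha> > 0"
  using p_gt_3 by (simp add: \<alpha>_def)

lemma alpha_times_p_minus_1: "\<alpha> * (p - 1) = 1"
  using p_gt_3 by (simp add: \<alpha>_def)

lemma beta_bounds: "1/2 < \<beta>" "\<beta> < 1"
  using p_gt_3 by (auto simp: betaexp_def field_simps)

lemma q_bounds: "1 < q" "q < 2"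
  using p_gt_3 by (auto simp: qexp_def field_simps)

lemma beta_times_q: "\<beta> * q = p / (p - 1)"
proof -
  have "p - 1 \<noteq> 0" "p + 1 \<noteq> 0" using p_gt_3 by auto
  then have "\<beta> * q = ((p + 1) * (2 * p)) / ((2 * (p - 1)) * (p + 1))"
    by (simp add: betaexp_def qexp_def)
  also have "\<dots> = p / (p - 1)"
    using \<open>p + 1 \<noteq> 0\<close> \<open>p - 1 \<noteq> 0\<close> by (simp add: divide_simps)
  finally show ?thesis .
qed

lemma two_beta_times_q: "2 * \<beta> * q = 2 * \<beta> + 1"
proof -
  have "p - 1 \<noteq> 0" using p_gt_3 by auto
  then have "2 * \<beta> + 1 = 2 * p / (p - 1)" by (simp add: betaexp_def field_simps)
  then show ?thesis using beta_times_q by (simp add: mult.assoc)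
qed

lemma bconst_nonneg: "b \<ge> 0"
  by (simp add: bconst_def)

lemma kappa_pos: "\<kappa> > 0"
  using p_gt_3 by (simp add: kappa_def)

lemma astar_nonneg: "a \<ge> 0"
  using bconst_nonneg kappa_pos p_gt_3 by (simp add: astar_def)

definition "\<sigma> s = s powr (- 2 * \<beta>)"
definition "\<tau> s = \<sigma> s / s"
definition "W y s = b * y^2 * \<sigma> s"
definition "G y s = p - 1 + W y s"

lemma sigma_pos: "s > 0 \<Longrightarrow> \<sigma> s > 0"
  by (simp add: \<sigma>_def)

lemma tau_pos: "s > 0 \<Longrightarrow> \<tau> s > 0"
  by (simp add: \<tau>_def sigma_pos)

lemma sigma_le_1: "s \<ge> 1 \<Longrightarrow> \<sigma> s \<le> 1"
  using beta_bounds by (simp add: \<sigma>_def powr_le_one_le ge_one_powr_ge_zero powr_minus divide_simps)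

lemma sigma_le_inverse: "s \<ge> 1 \<Longrightarrow> \<sigma> s \<le> 1 / s"
  using beta_bounds powr_mono[of "- 2 * \<beta>" "- 1" s]
  by (simp add: \<sigma>_def powr_minus divide_simps)

lemma tau_eq_powr: "\<tau> s = s powr (- (2 * \<beta> + 1))" if "s > 0"
proof -
  have "s powr (- 2 * \<beta> - 1) = s powr (- 2 * \<beta>) / s powr 1"
    by (rule powr_diff)
  then show ?thesis
    using that by (simp add: \<tau>_def \<sigma>_def)
qed

lemma sigma_sq_eq_powr: "s > 0 \<Longrightarrow> (\<sigma> s)^2 = s powr (- 4 * \<beta>)"
  by (simp add: \<sigma>_def power2_eq_square powr_add[symmetric])

lemma sigma_sq_le_tau: "s \<ge> 1 \<Longrightarrow> (\<sigma> s)^2 \<le> \<tau> s"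
  using beta_bounds by (simp add: tau_eq_powr sigma_sq_eq_powr, intro powr_mono) auto

lemma sigma_powr_q: "\<sigma> s powr q = \<tau> s" if "s > 0"
proof -
  have "\<sigma> s powr q = s powr (- 2 * \<beta> * q)"
    by (simp add: \<sigma>_def powr_powr)
  also have "- 2 * \<beta> * q = - (2 * \<beta> + 1)"
    using two_beta_times_q by simp
  finally show ?thesis
    using tau_eq_powr[OF that] by simp
qed

lemma W_nonneg: "W y s \<ge> 0" if "s > 0"
  using bconst_nonneg sigma_pos[OF that] by (simp add: W_def)

lemma G_ge: "s > 0 \<Longrightarrow> G y s \<ge> p - 1"
  using W_nonneg by (simp add: G_def)

lemma G_pos: "s > 0 \<Longrightarrow> G y s > 0"
  using G_ge[of s y] p_gt_3 by linarith

lemma G_eq: "G y s = p - 1 + b * y^2 * \<sigma> s"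
  by (simp add: G_def W_def)

lemma phi_eq: "phi p mu y s = G y s powr (- \<alpha>) + a * \<sigma> s"
  by (simp add: phi_def G_def W_def \<sigma>_def \<alpha>_def)

definition "phi_y y s = - \<alpha> * G y s powr (- \<alpha> - 1) * (2 * b * y * \<sigma> s)"

definition "phi_yy y s = - 2 * \<alpha> * b * \<sigma> s * G y s powr (- \<alpha> - 1)
   + 4 * \<alpha> * (\<alpha> + 1) * b^2 * y^2 * (\<sigma> s)^2 * G y s powr (- \<alpha> - 2)"

definition "phi_s y s = 2 * \<alpha> * \<beta> * b * y^2 * \<sigma> s * G y s powr (- \<alpha> - 1) / s
   - 2 * \<beta> * a * \<sigma> s / s"

lemma has_real_derivative_phi_y:
  assumes "s > 0"
  shows "((\<lambda>w. phi p mu w s) has_real_derivative phi_y y s) (at y)"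
proof -
  have "((\<lambda>w. G w s powr (- \<alpha>) + a * \<sigma> s) has_real_derivative phi_y y s) (at y)"
    unfolding G_def W_def phi_y_def
    by (rule derivative_eq_intros refl | use G_pos[OF assms] in \<open>simp add: G_def W_def\<close>)+
  then show ?thesis by (simp add: phi_eq)
qed

lemma has_real_derivative_phi_yy:
  assumes "s > 0"
  shows "((\<lambda>w. phi_y w s) has_real_derivative phi_yy y s) (at y)"
proof -
  have "((\<lambda>w. phi_y w s) has_real_derivative
     - \<alpha> * ((- \<alpha> - 1) * G y s powr (- \<alpha> - 1 - 1) * (2 * b * y * \<sigma> s)) * (2 * b * y * \<sigma> s)
     + - \<alpha> * G y s powr (- \<alpha> - 1) * (2 * b * \<sigma> s)) (at y)"
    unfolding G_def W_def phi_y_def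
    by (rule derivative_eq_intros refl | use G_pos[OF assms, of y] in \<open>simp add: G_def W_def\<close>)+
  then show ?thesis
    by (simp add: phi_yy_def power2_eq_square algebra_simps diff_diff_eq)
qed

lemma has_real_derivative_phi_s:
  assumes "s > 0"
  shows "((\<lambda>t. phi p mu y t) has_real_derivative phi_s y s) (at s)"
proof -
  have "((\<lambda>t. G y t powr (- \<alpha>) + a * t powr (- 2 * \<beta>)) has_real_derivative
      - \<alpha> * G y s powr (- \<alpha> - 1) * (b * y^2 * ((- 2 * \<beta>) * s powr (- 2 * \<beta> - 1)))
      + a * ((- 2 * \<beta>) * s powr (- 2 * \<beta> - 1))) (at s)"
    unfolding G_def W_def \<sigma>_def
    by (rule derivative_eq_intros refl
        | use G_pos[OF assms, of y] assms in \<open>simp add: G_def W_def \<sigma>_def\<close>)+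
  moreover have "s powr (- 2 * \<beta> - 1) = \<sigma> s / s"
    using assms by (simp add: \<sigma>_def powr_diff)
  then have "- \<alpha> * G y s powr (- \<alpha> - 1) * (b * y^2 * ((- 2 * \<beta>) * s powr (- 2 * \<beta> - 1)))
      + a * ((- 2 * \<beta>) * s powr (- 2 * \<beta> - 1)) = phi_s y s"
    by (simp add: phi_s_def algebra_simps)
  moreover have "(\<lambda>t. phi p mu y t) = (\<lambda>t. G y t powr (- \<alpha>) + a * t powr (- 2 * \<beta>))"
    by (simp add: phi_eq \<sigma>_def)
  ultimately show ?thesis by simp
qed

definition "R y s = phi_yy y s - y / 2 * phi_y y s - phi p mu y s / (p - 1) + phi p mu y s powr p
   - phi_s y s + mu * \<bar>phi_y y s\<bar> powr q"

lemma deriv_phi_y: "s > 0 \<Longrightarrow> deriv (\<lambda>w. phi p mu w s) = (\<lambda>z. phi_y z s)"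
  by (auto intro!: DERIV_imp_deriv has_real_derivative_phi_y)

lemma Rerr_eq: "Rerr p mu y s = R y s" if "s > 0"
  using that by (simp add: Rerr_def R_def deriv_phi_y
      DERIV_imp_deriv[OF has_real_derivative_phi_yy[OF that]]
      DERIV_imp_deriv[OF has_real_derivative_phi_s[OF that]])

definition "F y s = G y s powr (- \<alpha>)"
definition "P y s = G y s powr (- \<alpha> - 1)"
definition "Q y s = G y s powr (- \<alpha> - 2)"
definition "P0 = (p - 1) powr (- \<alpha> - 1)"
definition "Q0 = (p - 1) powr (- \<alpha> - 2)"

lemma P0_pos: "P0 > 0"
  using p_gt_3 by (simp add: P0_def)

lemma astar_eq: "a = 2 * \<alpha> * b * P0"
proof -
  have "P0 = (p - 1) powr (- \<alpha>) * (p - 1) powr (- 1)"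
    unfolding P0_def using powr_add[of "p - 1" "- \<alpha>" "- 1"] by simp
  also have "\<dots> = \<kappa> / (p - 1)"
    using p_gt_3 by (simp add: kappa_def \<alpha>_def powr_minus divide_simps)
  finally show ?thesis
    by (simp add: astar_def \<alpha>_def power2_eq_square)
qed

lemma F_eq_G_times_P: "F y s = G y s * P y s" if "s > 0"
  using G_pos[OF that, of y] powr_add[of "G y s" 1 "- \<alpha> - 1"] by (simp add: F_def P_def)

lemma F_pos: "F y s > 0" if "s > 0"
  using G_pos[OF that, of y] by (simp add: F_def)

lemma F_le_kappa: "F y s \<le> \<kappa>" if "s > 0"
  unfolding F_def kappa_def using G_ge[OF that, of y] p_gt_3 alpha_pos
  by (simp add: \<alpha>_def) (intro powr_mono2', auto)

lemma F_powr_p: "F y s powr p = P y s" if "s > 0"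
proof -
  have "- \<alpha> * p = - \<alpha> - 1"
    using alpha_times_p_minus_1 by (simp add: algebra_simps)
  then show ?thesis
    using G_pos[OF that, of y] by (simp add: F_def P_def powr_powr)
qed

lemma F_powr_p_minus_1: "F y s powr (p - 1) = 1 / G y s" if "s > 0"
proof -
  have "- \<alpha> * (p - 1) = - 1"
    using alpha_times_p_minus_1 by (simp add: algebra_simps)
  then have "F y s powr (p - 1) = G y s powr (- 1)"
    by (simp add: F_def powr_powr)
  then show ?thesis
    using G_pos[OF that, of y] by (simp add: powr_minus divide_simps)
qed

lemma P_pos: "P y s > 0" if "s > 0"
  using G_pos[OF that, of y] by (simp add: P_def)

lemma P_le_P0: "P y s \<le> P0" if "s > 0"
  unfolding P_def P0_def using G_ge[OF that, of y] p_gt_3 alpha_pos by (intro powr_mono2') auto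

lemma Q_nonneg: "Q y s \<ge> 0"
  by (simp add: Q_def)

lemma Q_le_Q0: "Q y s \<le> Q0" if "s > 0"
  unfolding Q_def Q0_def using G_ge[OF that, of y] p_gt_3 alpha_pos by (intro powr_mono2') auto

definition "cP = (\<alpha> + 1) * (p - 1) powr (- \<alpha> - 2)"
definition "cG = (p - 1) powr (- 2)"
definition "cPq = (\<alpha> + 1) * q * (p - 1) powr (- ((\<alpha> + 1) * q) - 1)"

lemma lipschitz_constants_nonneg: "cP \<ge> 0" "cG \<ge> 0" "cPq \<ge> 0"
  using alpha_pos q_bounds by (simp_all add: cP_def cG_def cPq_def)

lemma abs_P_diff_le: "\<bar>P y s - P0\<bar> \<le> cP * W y s" if "s > 0"
proof -
  have "\<bar>(p - 1 + W y s) powr (- (\<alpha> + 1)) - (p - 1) powr (- (\<alpha> + 1))\<bar>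
          \<le> (\<alpha> + 1) * (p - 1) powr (- (\<alpha> + 1) - 1) * W y s"
    using abs_powr_neg_diff_le[of "p - 1" "W y s" "\<alpha> + 1"] p_gt_3 alpha_pos W_nonneg[OF that, of y]
    by simp
  then show ?thesis
    by (simp add: P_def P0_def G_def cP_def diff_diff_eq)
qed

lemma abs_inverse_G_diff_le: "\<bar>1 / G y s - \<alpha>\<bar> \<le> cG * W y s" if "s > 0"
proof -
  have "\<bar>(p - 1 + W y s) powr (- 1) - (p - 1) powr (- 1)\<bar> \<le> 1 * (p - 1) powr (- 1 - 1) * W y s"
    using abs_powr_neg_diff_le[of "p - 1" "W y s" 1] p_gt_3 W_nonneg[OF that, of y] by simp
  moreover have "(p - 1 + W y s) powr (- 1) = 1 / G y s" "(p - 1) powr (- 1) = \<alpha>"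
    using G_pos[OF that, of y] p_gt_3 by (auto simp: G_def powr_minus \<alpha>_def divide_simps)
  ultimately show ?thesis
    by (simp add: cG_def)
qed

lemma abs_P_powr_q_diff_le: "\<bar>P y s powr q - P0 powr q\<bar> \<le> cPq * W y s" if "s > 0"
proof -
  have "(- \<alpha> - 1) * q = - ((\<alpha> + 1) * q)"
    by (simp add: algebra_simps)
  then have "P y s powr q = (p - 1 + W y s) powr (- ((\<alpha> + 1) * q))"
    "P0 powr q = (p - 1) powr (- ((\<alpha> + 1) * q))"
    by (simp_all add: P_def P0_def G_def powr_powr)
  then show ?thesis
    unfolding cPq_def
    using abs_powr_neg_diff_le[of "p - 1" "W y s" "(\<alpha> + 1) * q"] p_gt_3 alpha_pos q_bounds
      W_nonneg[OF that, of y]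
    by (simp add: algebra_simps)
qed

text \<open>The splitting \<open>R = \<tau> M + E\<close>: \<open>M\<close> collects the terms of order \<open>s^{-(2\<beta>+1)}\<close>, and the
  remainder \<open>E\<close> consists of the Lipschitz defects above and the Taylor remainder of \<open>\<phi>^p\<close>.\<close>

definition "M y = 2 * \<beta> * a - \<beta> * a * y^2 + mu * a powr q * \<bar>y\<bar> powr q"
definition "B y s = - 2 * \<alpha> * b * (P y s - P0) + p * a * (1 / G y s - \<alpha>)"
definition "T1 y s = 4 * \<alpha> * (\<alpha> + 1) * b^2 * y^2 * (\<sigma> s)^2 * Q y s"
definition "T2 y s = (F y s + a * \<sigma> s) powr p - P y s - p * a * \<sigma> s / G y s"
definition "T3 y s = - 2 * \<alpha> * \<beta> * b * \<sigma> s * y^2 * (P y s - P0) / s"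
definition "T4 y s = mu * ((2 * \<alpha> * b * \<bar>y\<bar> * \<sigma> s * P y s) powr q
     - (2 * \<alpha> * b * \<bar>y\<bar> * \<sigma> s * P0) powr q)"
definition "E y s = \<sigma> s * B y s + T1 y s + T2 y s + T3 y s + T4 y s"

lemma R_expansion_identity:
  fixes f g pp p0 a al b y sg u p' bt t2 t3 t5 m gi :: real
  assumes "f = g * pp" "g = p' - 1 + b * y^2 * sg" "a = 2 * al * b * p0" "al * (p' - 1) = 1"
  shows "(- 2 * al * b * sg * pp + t2) - y / 2 * (- al * pp * (2 * b * y * sg)) - al * (f + a * sg)
     + (t3 + pp + p' * a * sg * gi)
     - (2 * al * bt * b * y^2 * sg * pp * u - 2 * bt * a * sg * u) + (t5 + m)
   = u * sg * (2 * bt * a - bt * a * y^2) + m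
     + sg * (- 2 * al * b * (pp - p0) + p' * a * (gi - al)) + t2 + t3
     + (- 2 * al * bt * b * sg * y^2 * (pp - p0) * u) + t5"
  using assms by algebra

lemma R_eq_tau_M_plus_E: "R y s = \<tau> s * M y + E y s" if "s > 0"
proof -
  have abs_phi_y: "\<bar>phi_y y s\<bar> = 2 * \<alpha> * b * \<bar>y\<bar> * \<sigma> s * P y s"
    using alpha_pos bconst_nonneg sigma_pos[OF that] P_pos[OF that, of y]
    by (simp add: phi_y_def P_def abs_mult)
  have "2 * \<alpha> * b * \<bar>y\<bar> * \<sigma> s * P0 = (a * \<bar>y\<bar>) * \<sigma> s"
    by (simp add: astar_eq algebra_simps)
  then have leading: "(2 * \<alpha> * b * \<bar>y\<bar> * \<sigma> s * P0) powr q = a powr q * \<bar>y\<bar> powr q * \<tau> s"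
    by (simp only: powr_mult sigma_powr_q[OF that])
  have phi: "phi p mu y s = F y s + a * \<sigma> s"
    by (simp add: phi_eq F_def)
  have "phi p mu y s / (p - 1) = \<alpha> * (F y s + a * \<sigma> s)"
    by (simp add: phi \<alpha>_def)
  moreover have "phi p mu y s powr p = T2 y s + P y s + p * a * \<sigma> s * (1 / G y s)"
    by (simp add: T2_def phi)
  moreover have "mu * \<bar>phi_y y s\<bar> powr q = T4 y s + mu * a powr q * \<bar>y\<bar> powr q * \<tau> s"
    by (simp only: T4_def abs_phi_y leading) (simp add: algebra_simps)
  moreover have "phi_yy y s = - 2 * \<alpha> * b * \<sigma> s * P y s + T1 y s"
    by (simp add: phi_yy_def T1_def P_def Q_def)
  moreover have "phi_y y s = - \<alpha> * P y s * (2 * b * y * \<sigma> s)"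
    by (simp add: phi_y_def P_def)
  moreover have "phi_s y s = 2 * \<alpha> * \<beta> * b * y^2 * \<sigma> s * P y s * (1/s) - 2 * \<beta> * a * \<sigma> s * (1/s)"
    by (simp add: phi_s_def P_def)
  ultimately have "R y s = (- 2 * \<alpha> * b * \<sigma> s * P y s + T1 y s) - y / 2 * (- \<alpha> * P y s * (2 * b * y * \<sigma> s))
     - \<alpha> * (F y s + a * \<sigma> s) + (T2 y s + P y s + p * a * \<sigma> s * (1 / G y s))
     - (2 * \<alpha> * \<beta> * b * y^2 * \<sigma> s * P y s * (1/s) - 2 * \<beta> * a * \<sigma> s * (1/s))
     + (T4 y s + mu * a powr q * \<bar>y\<bar> powr q * \<tau> s)"
    unfolding R_def by simp
  also have "\<dots> = (1/s) * \<sigma> s * (2 * \<beta> * a - \<beta> * a * y^2) + mu * a powr q * \<bar>y\<bar> powr q * \<tau> s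
     + \<sigma> s * (- 2 * \<alpha> * b * (P y s - P0) + p * a * (1 / G y s - \<alpha>)) + T1 y s + T2 y s
     + (- 2 * \<alpha> * \<beta> * b * \<sigma> s * y^2 * (P y s - P0) * (1/s)) + T4 y s"
    by (rule R_expansion_identity[OF F_eq_G_times_P[OF that] G_eq astar_eq alpha_times_p_minus_1])
  also have "\<dots> = \<tau> s * M y + E y s"
    using that by (simp add: \<tau>_def M_def B_def T3_def E_def field_simps)
  finally show ?thesis .
qed


lemma astar_sigma_le: "a * \<sigma> s \<le> a" if "s \<ge> 1"
  using mult_left_le[OF sigma_le_1[OF that] astar_nonneg] .

lemma abs_sigma_B_le: "\<bar>\<sigma> s * B y s\<bar> \<le> (2 * \<alpha> * b * cP + p * a * cG) * b * y^2 * (\<sigma> s)^2" if "s \<ge> 1"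
proof -
  have s: "s > 0" using that by simp
  have "\<bar>B y s\<bar> \<le> 2 * \<alpha> * b * \<bar>P y s - P0\<bar> + p * a * \<bar>1 / G y s - \<alpha>\<bar>"
    unfolding B_def using abs_triangle_ineq[of "- 2 * \<alpha> * b * (P y s - P0)" "p * a * (1 / G y s - \<alpha>)"]
      alpha_pos bconst_nonneg astar_nonneg p_gt_3
    by (simp add: abs_mult)
  also have "\<dots> \<le> 2 * \<alpha> * b * (cP * W y s) + p * a * (cG * W y s)"
    using abs_P_diff_le[OF s] abs_inverse_G_diff_le[OF s] alpha_pos bconst_nonneg astar_nonneg p_gt_3
    by (intro add_mono mult_left_mono) auto
  finally have "\<sigma> s * \<bar>B y s\<bar> \<le> \<sigma> s * ((2 * \<alpha> * b * cP + p * a * cG) * W y s)"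
    using sigma_pos[OF s] by (intro mult_left_mono) (auto simp: algebra_simps)
  then show ?thesis
    using sigma_pos[OF s] by (simp add: abs_mult W_def power2_eq_square algebra_simps)
qed

lemma abs_T1_le: "\<bar>T1 y s\<bar> \<le> 4 * \<alpha> * (\<alpha> + 1) * b^2 * Q0 * y^2 * (\<sigma> s)^2" if "s > 0"
proof -
  have "\<bar>T1 y s\<bar> = 4 * \<alpha> * (\<alpha> + 1) * b^2 * y^2 * (\<sigma> s)^2 * Q y s"
    unfolding T1_def using alpha_pos Q_nonneg[of y s] by (simp add: abs_mult)
  also have "\<dots> \<le> 4 * \<alpha> * (\<alpha> + 1) * b^2 * y^2 * (\<sigma> s)^2 * Q0"
    using Q_le_Q0[OF that, of y] alpha_pos by (intro mult_left_mono) auto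
  finally show ?thesis by (simp add: algebra_simps)
qed

lemma abs_T2_le: "\<bar>T2 y s\<bar> \<le> p * (p - 1) * (\<kappa> + a) powr (p - 2) * a^2 * (\<sigma> s)^2" if "s \<ge> 1"
proof -
  have s: "s > 0" using that by simp
  have "T2 y s = (F y s + a * \<sigma> s) powr p - F y s powr p - p * F y s powr (p - 1) * (a * \<sigma> s)"
    unfolding T2_def F_powr_p[OF s] F_powr_p_minus_1[OF s] by simp
  then have "\<bar>T2 y s\<bar> \<le> p * (p - 1) * (F y s + a * \<sigma> s) powr (p - 2) * (a * \<sigma> s)^2"
    using F_pos[OF s, of y] astar_nonneg sigma_pos[OF s] p_gt_3
    by (simp only:) (intro abs_powr_taylor2_le, auto)
  also have "\<dots> \<le> p * (p - 1) * (\<kappa> + a) powr (p - 2) * (a * \<sigma> s)^2"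
    using F_pos[OF s, of y] F_le_kappa[OF s, of y] astar_nonneg sigma_pos[OF s] p_gt_3
      astar_sigma_le[OF that]
    by (intro mult_right_mono mult_left_mono powr_mono2) auto
  finally show ?thesis by (simp add: power_mult_distrib algebra_simps)
qed

lemma abs_T3_le: "\<bar>T3 y s\<bar> \<le> 2 * \<alpha> * \<beta> * b^2 * cP * y^4 * (\<sigma> s)^2 / s" if "s > 0"
proof -
  have "\<bar>T3 y s\<bar> = 2 * \<alpha> * \<beta> * b * \<sigma> s * y^2 * \<bar>P y s - P0\<bar> / s"
    unfolding T3_def using alpha_pos beta_bounds bconst_nonneg sigma_pos[OF that] that
    by (simp add: abs_mult)
  also have "\<dots> \<le> 2 * \<alpha> * \<beta> * b * \<sigma> s * y^2 * (cP * W y s) / s"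
    using abs_P_diff_le[OF that, of y] alpha_pos beta_bounds bconst_nonneg sigma_pos[OF that] that
    by (intro divide_right_mono mult_left_mono) auto
  finally show ?thesis
    by (simp add: W_def power2_eq_square power4_eq_xxxx algebra_simps)
qed

lemma abs_T4_le:
  "\<bar>T4 y s\<bar> \<le> mu * (2 * \<alpha> * b) powr q * cPq * b * (y^2 + y^4) * (\<sigma> s)^2 / s" if "s > 0"
proof -
  have "T4 y s = mu * (2 * \<alpha> * b * \<bar>y\<bar> * \<sigma> s) powr q * (P y s powr q - P0 powr q)"
    unfolding T4_def by (simp add: powr_mult algebra_simps)
  then have "\<bar>T4 y s\<bar> = mu * (2 * \<alpha> * b * \<bar>y\<bar> * \<sigma> s) powr q * \<bar>P y s powr q - P0 powr q\<bar>"
    using mu_pos by (simp add: abs_mult)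
  also have "\<dots> \<le> mu * (2 * \<alpha> * b * \<bar>y\<bar> * \<sigma> s) powr q * (cPq * W y s)"
    using abs_P_powr_q_diff_le[OF that, of y] mu_pos by (intro mult_left_mono) auto
  also have "\<dots> = mu * (2 * \<alpha> * b) powr q * cPq * b * (\<bar>y\<bar> powr q * y^2) * (\<sigma> s)^2 / s"
    using sigma_powr_q[OF that] by (simp add: powr_mult \<tau>_def W_def power2_eq_square algebra_simps)
  also have "\<dots> \<le> mu * (2 * \<alpha> * b) powr q * cPq * b * (y^2 + y^4) * (\<sigma> s)^2 / s"
  proof -
    have "\<bar>y\<bar> powr q * y^2 \<le> (1 + y^2) * y^2"
      using abs_powr_le_1_plus_sq[of q y] q_bounds by (intro mult_right_mono) auto
    also have "\<dots> = y^2 + y^4" by algebra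
    finally show ?thesis
      using mu_pos bconst_nonneg lipschitz_constants_nonneg that
      by (intro divide_right_mono mult_right_mono mult_left_mono) auto
  qed
  finally show ?thesis .
qed

definition "cE1 = (2 * \<alpha> * b * cP + p * a * cG) * b + 4 * \<alpha> * (\<alpha> + 1) * b^2 * Q0
   + p * (p - 1) * (\<kappa> + a) powr (p - 2) * a^2 + mu * (2 * \<alpha> * b) powr q * cPq * b"
definition "cE2 = 2 * \<alpha> * \<beta> * b^2 * cP + mu * (2 * \<alpha> * b) powr q * cPq * b"

lemma E_constants_nonneg: "0 \<le> cE1" "0 \<le> cE2"
  unfolding cE1_def cE2_def
  using alpha_pos bconst_nonneg astar_nonneg p_gt_3 lipschitz_constants_nonneg mu_pos beta_bounds
  by (auto simp: Q0_def)

lemma abs_E_le: "\<bar>E y s\<bar> \<le> (\<sigma> s)^2 * (cE1 * (1 + y^2) + cE2 * y^4 / s)" if s: "s \<ge> 1"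
proof -
  define k1 where "k1 = (2 * \<alpha> * b * cP + p * a * cG) * b + 4 * \<alpha> * (\<alpha> + 1) * b^2 * Q0"
  define k3 where "k3 = p * (p - 1) * (\<kappa> + a) powr (p - 2) * a^2"
  define k4 where "k4 = 2 * \<alpha> * \<beta> * b^2 * cP"
  define k5 where "k5 = mu * (2 * \<alpha> * b) powr q * cPq * b"
  have k: "0 \<le> k1" "0 \<le> k3" "0 \<le> k5"
    unfolding k1_def k3_def k5_def
    using alpha_pos bconst_nonneg astar_nonneg p_gt_3 lipschitz_constants_nonneg mu_pos
    by (auto simp: Q0_def)
  define u where "u = (\<sigma> s)^2"
  have u: "0 \<le> u" by (simp add: u_def)
  have "\<bar>E y s\<bar> \<le> \<bar>\<sigma> s * B y s\<bar> + \<bar>T1 y s\<bar> + \<bar>T2 y s\<bar> + \<bar>T3 y s\<bar> + \<bar>T4 y s\<bar>"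
    unfolding E_def by linarith
  also have "\<dots> \<le> k1 * y^2 * u + k3 * u + k4 * y^4 * u / s + k5 * (y^2 + y^4) * u / s"
    using abs_sigma_B_le[OF s, of y] abs_T1_le[of s y] abs_T2_le[OF s, of y] abs_T3_le[of s y]
      abs_T4_le[of s y] s
    unfolding k1_def k3_def k4_def k5_def u_def by (simp add: algebra_simps)
  also have "\<dots> \<le> u * ((k1 + k3 + k5) * (1 + y^2) + (k4 + k5) * y^4 / s)"
  proof -
    have "0 \<le> k5 * y^2 * u"
      using k u by simp
    then have "k5 * y^2 * u / s \<le> k5 * y^2 * u"
      using s by (simp add: divide_le_eq mult_le_cancel_left1)
    moreover have "0 \<le> k1 * u" "0 \<le> k3 * u * y^2" "0 \<le> k5 * u"
      using k u by simp_all
    ultimately show ?thesis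
      by (simp add: algebra_simps add_divide_distrib)
  qed
  finally show ?thesis
    by (simp add: u_def k1_def k3_def k4_def k5_def cE1_def cE2_def)
qed

lemma abs_E_le_power4: "\<bar>E y s\<bar> \<le> (2 * cE1 + cE2) * (\<sigma> s)^2 * (1 + y^4)" if s: "s \<ge> 1"
proof -
  have "cE1 * (1 + y^2) \<le> cE1 * (2 * (1 + y^4))"
    using one_plus_sq_le(1) E_constants_nonneg(1) by (rule mult_left_mono)
  moreover have "cE2 * y^4 / s \<le> cE2 * (1 + y^4)"
  proof -
    have "0 \<le> cE2 * y^4" using E_constants_nonneg by simp
    then have "cE2 * y^4 / s \<le> cE2 * y^4"
      using s by (simp add: divide_le_eq mult_le_cancel_left1)
    also have "\<dots> \<le> cE2 * (1 + y^4)"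
      using E_constants_nonneg by (simp add: algebra_simps)
    finally show ?thesis .
  qed
  ultimately have "cE1 * (1 + y^2) + cE2 * y^4 / s \<le> (2 * cE1 + cE2) * (1 + y^4)"
    by (simp add: algebra_simps)
  then have "(\<sigma> s)^2 * (cE1 * (1 + y^2) + cE2 * y^4 / s) \<le> (\<sigma> s)^2 * ((2 * cE1 + cE2) * (1 + y^4))"
    by (intro mult_left_mono) auto
  then show ?thesis
    using abs_E_le[OF s, of y] by (simp add: algebra_simps)
qed

definition "cM = 3 * \<beta> * a + mu * a powr q"

lemma cM_nonneg: "cM \<ge> 0"
  using astar_nonneg beta_bounds mu_pos by (simp add: cM_def)

lemma abs_M_le: "\<bar>M y\<bar> \<le> cM * (1 + y^2)"
proof -
  have "\<bar>M y\<bar> \<le> 2 * \<beta> * a + \<beta> * a * y^2 + mu * a powr q * \<bar>y\<bar> powr q"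
    unfolding M_def using astar_nonneg beta_bounds mu_pos by (simp add: abs_le_iff)
  also have "\<dots> \<le> 2 * \<beta> * a + \<beta> * a * y^2 + mu * a powr q * (1 + y^2)"
    using abs_powr_le_1_plus_sq[of q y] q_bounds mu_pos by (intro add_left_mono mult_left_mono) auto
  also have "\<dots> \<le> cM * (1 + y^2)"
    using astar_nonneg beta_bounds mu_pos unfolding cM_def by (simp add: algebra_simps)
  finally show ?thesis .
qed

lemma abs_M_le_power4: "\<bar>M y\<bar> \<le> 2 * cM * (1 + y^4)" "y^2 * \<bar>M y\<bar> \<le> 2 * cM * (1 + y^4)"
proof -
  have "cM * (1 + y^2) \<le> cM * (2 * (1 + y^4))"
    using one_plus_sq_le(1) cM_nonneg by (rule mult_left_mono)
  then show "\<bar>M y\<bar> \<le> 2 * cM * (1 + y^4)"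
    using abs_M_le[of y] by (simp add: algebra_simps)
  have "y^2 * \<bar>M y\<bar> \<le> y^2 * (cM * (1 + y^2))"
    using abs_M_le[of y] by (intro mult_left_mono) auto
  also have "\<dots> = cM * (y^2 * (1 + y^2))"
    by (simp add: mult_ac)
  also have "\<dots> \<le> cM * (2 * (1 + y^4))"
    using poly_products_le_1_plus_power6(3)[of y] cM_nonneg by (intro mult_left_mono)
  finally show "y^2 * \<bar>M y\<bar> \<le> 2 * cM * (1 + y^4)"
    by (simp add: algebra_simps)
qed

lemma abs_R_le_tau_M_E: "\<bar>R y s\<bar> \<le> \<tau> s * \<bar>M y\<bar> + \<bar>E y s\<bar>" if "s > 0"
  unfolding R_eq_tau_M_plus_E[OF that] using tau_pos[OF that] abs_triangle_ineq[of "\<tau> s * M y" "E y s"]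
  by (simp add: abs_mult)

lemma R_eq_global_terms:
  "R y s = - 2 * \<alpha> * b * \<sigma> s * P y s + T1 y s - \<alpha> * a * \<sigma> s
     + (phi p mu y s powr p - P y s) - phi_s y s + mu * \<bar>phi_y y s\<bar> powr q" if "s > 0"
proof -
  have identity: "\<And>f g pp al b y sg t2 p' aa :: real. f = g * pp \<Longrightarrow> g = p' - 1 + b * y^2 * sg \<Longrightarrow>
     al * (p' - 1) = 1 \<Longrightarrow>
     (- 2 * al * b * sg * pp + t2) - y / 2 * (- al * pp * (2 * b * y * sg)) - al * (f + aa * sg) + pp
     = - 2 * al * b * sg * pp + t2 - al * aa * sg"
    by algebra
  have "phi p mu y s / (p - 1) = \<alpha> * (F y s + a * \<sigma> s)"
    by (simp add: phi_eq F_def \<alpha>_def)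
  moreover have "phi_yy y s = - 2 * \<alpha> * b * \<sigma> s * P y s + T1 y s"
    by (simp add: phi_yy_def T1_def P_def Q_def)
  moreover have "phi_y y s = - \<alpha> * P y s * (2 * b * y * \<sigma> s)"
    by (simp add: phi_y_def P_def)
  ultimately have "R y s = ((- 2 * \<alpha> * b * \<sigma> s * P y s + T1 y s) - y / 2 * (- \<alpha> * P y s * (2 * b * y * \<sigma> s))
       - \<alpha> * (F y s + a * \<sigma> s) + P y s) + (phi p mu y s powr p - P y s) - phi_s y s
       + mu * \<bar>phi_y y s\<bar> powr q"
    unfolding R_def by simp
  also have "\<dots> = - 2 * \<alpha> * b * \<sigma> s * P y s + T1 y s - \<alpha> * a * \<sigma> s
     + (phi p mu y s powr p - P y s) - phi_s y s + mu * \<bar>phi_y y s\<bar> powr q"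
    unfolding identity[OF F_eq_G_times_P[OF that] G_eq alpha_times_p_minus_1] ..
  finally show ?thesis .
qed

lemma W_le_G: "W y s \<le> G y s"
  using p_gt_3 by (simp add: G_def)

lemma W_times_Q_le: "W y s * Q y s \<le> P0" if "s > 0"
proof -
  have "W y s * Q y s \<le> G y s * Q y s"
    using W_le_G Q_nonneg by (intro mult_right_mono) auto
  also have "G y s * Q y s = P y s"
  proof -
    have "G y s powr (- \<alpha> - 2 + 1) = G y s powr (- \<alpha> - 2) * G y s powr 1"
      by (rule powr_add)
    moreover have "- \<alpha> - 2 + 1 = - \<alpha> - 1" by simp
    ultimately show ?thesis
      using G_pos[OF that, of y] by (simp add: Q_def P_def)
  qed
  finally show ?thesis
    using P_le_P0[OF that, of y] by simp
qed

lemma W_times_P_le: "W y s * P y s \<le> \<kappa>" if "s > 0"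
proof -
  have "W y s * P y s \<le> G y s * P y s"
    using W_le_G P_pos[OF that, of y] by (intro mult_right_mono) auto
  also have "\<dots> = F y s"
    using F_eq_G_times_P[OF that] by simp
  finally show ?thesis
    using F_le_kappa[OF that, of y] by simp
qed

text \<open>Since \<open>\<bar>y\<bar> \<le> \<surd>(W / (b \<sigma>))\<close> and \<open>\<surd>W \<le> G\<close>, the slope \<open>\<bar>\<phi>\<^sub>y\<bar>\<close> is at most a constant times \<open>\<surd>\<sigma> \<sim> s^{-\<beta>}\<close>.\<close>
lemma abs_phi_y_le: "\<bar>phi_y y s\<bar> \<le> 2 * \<alpha> * sqrt b * \<kappa> * sqrt (\<sigma> s)" if "s > 0"
proof -
  have "sqrt (W y s) \<le> sqrt (G y s)"
    using W_le_G by simp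
  also have "\<dots> \<le> sqrt (G y s) * sqrt (G y s)"
  proof -
    have "1 \<le> sqrt (G y s)"
      using G_ge[OF that, of y] p_gt_3 by simp
    then show ?thesis
      using mult_left_mono[of 1 "sqrt (G y s)" "sqrt (G y s)"] by simp
  qed
  also have "\<dots> = G y s"
    using G_pos[OF that, of y] by simp
  finally have sqrt_W: "sqrt (W y s) \<le> G y s" .
  have "b * \<bar>y\<bar> * \<sigma> s = sqrt (b * \<sigma> s) * sqrt (W y s)"
    using bconst_nonneg sigma_pos[OF that] unfolding W_def
    by (simp add: real_sqrt_mult real_sqrt_abs[symmetric] del: real_sqrt_abs)
      (smt (verit, best) mult.commute mult.left_commute real_sqrt_mult_self)
  then have "\<bar>phi_y y s\<bar> = 2 * \<alpha> * sqrt (b * \<sigma> s) * (sqrt (W y s) * P y s)"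
    using alpha_pos bconst_nonneg sigma_pos[OF that] P_pos[OF that, of y]
    by (simp add: phi_y_def P_def abs_mult)
  also have "\<dots> \<le> 2 * \<alpha> * sqrt (b * \<sigma> s) * (G y s * P y s)"
    using sqrt_W alpha_pos P_pos[OF that, of y] bconst_nonneg sigma_pos[OF that]
    by (intro mult_left_mono mult_right_mono) auto
  also have "G y s * P y s \<le> \<kappa>"
    using F_eq_G_times_P[OF that] F_le_kappa[OF that, of y] by simp
  then have "2 * \<alpha> * sqrt (b * \<sigma> s) * (G y s * P y s) \<le> 2 * \<alpha> * sqrt (b * \<sigma> s) * \<kappa>"
    using alpha_pos bconst_nonneg sigma_pos[OF that] by (intro mult_left_mono) auto
  finally show ?thesis
    by (simp add: real_sqrt_mult algebra_simps)
qed

lemma abs_T1_le_inverse: "\<bar>T1 y s\<bar> \<le> 4 * \<alpha> * (\<alpha> + 1) * b * P0 / s" if "s \<ge> 1"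
proof -
  have s: "s > 0" using that by simp
  have "T1 y s = 4 * \<alpha> * (\<alpha> + 1) * b * \<sigma> s * (W y s * Q y s)"
    by (simp add: T1_def W_def power2_eq_square algebra_simps)
  moreover have "0 \<le> 4 * \<alpha> * (\<alpha> + 1) * b * \<sigma> s * (W y s * Q y s)"
    using W_nonneg[OF s, of y] Q_nonneg[of y s] alpha_pos bconst_nonneg sigma_pos[OF s] by simp
  ultimately have "\<bar>T1 y s\<bar> = 4 * \<alpha> * (\<alpha> + 1) * b * \<sigma> s * (W y s * Q y s)"
    by simp
  also have "\<dots> \<le> 4 * \<alpha> * (\<alpha> + 1) * b * (1 / s) * P0"
    using alpha_pos bconst_nonneg sigma_pos[OF s] sigma_le_inverse[OF that] W_times_Q_le[OF s, of y]
      W_nonneg[OF s, of y] Q_nonneg[of y s] s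
    by (intro mult_left_mono mult_mono) auto
  finally show ?thesis by simp
qed

lemma abs_phi_powr_p_diff_le: "\<bar>phi p mu y s powr p - P y s\<bar> \<le> a * p * (\<kappa> + a) powr (p - 1) / s"
  if "s \<ge> 1"
proof -
  have s: "s > 0" using that by simp
  have phi: "phi p mu y s = F y s + a * \<sigma> s"
    by (simp add: phi_eq F_def)
  have "0 \<le> (F y s + a * \<sigma> s) powr p - F y s powr p"
    "(F y s + a * \<sigma> s) powr p - F y s powr p
       \<le> (F y s + a * \<sigma> s - F y s) * p * (F y s + a * \<sigma> s) powr (p - 1)"
    using F_pos[OF s, of y] astar_nonneg sigma_pos[OF s] p_gt_3 by (intro powr_diff_le; simp)+
  moreover have "(F y s + a * \<sigma> s) powr (p - 1) \<le> (\<kappa> + a) powr (p - 1)"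
    using F_pos[OF s, of y] F_le_kappa[OF s, of y] astar_nonneg sigma_pos[OF s] p_gt_3
      astar_sigma_le[OF that]
    by (intro powr_mono2) auto
  then have "(a * \<sigma> s) * p * (F y s + a * \<sigma> s) powr (p - 1) \<le> (a * (1 / s)) * p * (\<kappa> + a) powr (p - 1)"
    using astar_nonneg sigma_pos[OF s] sigma_le_inverse[OF that] p_gt_3 s
    by (intro mult_mono) (auto intro: mult_left_mono)
  ultimately show ?thesis
    unfolding phi F_powr_p[OF s, symmetric] by simp
qed

lemma abs_phi_s_le: "\<bar>phi_s y s\<bar> \<le> (2 * \<alpha> * \<beta> * \<kappa> + 2 * \<beta> * a) / s" if "s \<ge> 1"
proof -
  have s: "s > 0" using that by simp
  have "phi_s y s = (2 * \<alpha> * \<beta> * (W y s * P y s) - 2 * \<beta> * a * \<sigma> s) / s"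
    by (simp add: phi_s_def W_def P_def diff_divide_distrib algebra_simps)
  moreover have "\<bar>2 * \<alpha> * \<beta> * (W y s * P y s) - 2 * \<beta> * a * \<sigma> s\<bar> \<le> 2 * \<alpha> * \<beta> * \<kappa> + 2 * \<beta> * a"
  proof -
    have "0 \<le> 2 * \<alpha> * \<beta> * (W y s * P y s)"
      using W_nonneg[OF s, of y] P_pos[OF s, of y] alpha_pos beta_bounds by simp
    moreover have "2 * \<alpha> * \<beta> * (W y s * P y s) \<le> 2 * \<alpha> * \<beta> * \<kappa>"
      using W_times_P_le[OF s, of y] alpha_pos beta_bounds by (intro mult_left_mono) auto
    moreover have "0 \<le> 2 * \<beta> * a * \<sigma> s"
      using beta_bounds astar_nonneg sigma_pos[OF s] by simp
    moreover have "2 * \<beta> * a * \<sigma> s \<le> 2 * \<beta> * a"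
      using astar_sigma_le[OF that] beta_bounds by (simp add: mult.assoc)
    ultimately show ?thesis
      by (simp only: abs_le_iff) linarith
  qed
  ultimately show ?thesis
    using s by (simp add: abs_divide divide_right_mono)
qed

lemma phi_y_powr_q_le: "mu * \<bar>phi_y y s\<bar> powr q \<le> mu * (2 * \<alpha> * sqrt b * \<kappa>) powr q / s"
  if "s \<ge> 1"
proof -
  have s: "s > 0" using that by simp
  have "\<bar>phi_y y s\<bar> powr q \<le> (2 * \<alpha> * sqrt b * \<kappa> * sqrt (\<sigma> s)) powr q"
    using abs_phi_y_le[OF s, of y] q_bounds by (intro powr_mono2) auto
  also have "\<dots> = (2 * \<alpha> * sqrt b * \<kappa>) powr q * sqrt (\<sigma> s) powr q"
    by (simp add: powr_mult)
  also have "sqrt (\<sigma> s) powr q = s powr (- \<beta> * q)"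
    using s by (simp add: \<sigma>_def powr_half_sqrt[symmetric] powr_powr)
  also have "s powr (- \<beta> * q) \<le> s powr (- 1)"
    using that p_gt_3 by (intro powr_mono) (auto simp: beta_times_q)
  also have "s powr (- 1) = 1 / s"
    using s by (simp add: powr_minus divide_simps)
  finally have "\<bar>phi_y y s\<bar> powr q \<le> (2 * \<alpha> * sqrt b * \<kappa>) powr q * (1 / s)"
    by (simp add: mult_left_mono)
  then have "mu * \<bar>phi_y y s\<bar> powr q \<le> mu * ((2 * \<alpha> * sqrt b * \<kappa>) powr q * (1 / s))"
    using mu_pos by (intro mult_left_mono) auto
  then show ?thesis by simp
qed

definition "cRinv = 2 * \<alpha> * b * P0 + 4 * \<alpha> * (\<alpha> + 1) * b * P0 + \<alpha> * a + a * p * (\<kappa> + a) powr (p - 1)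
   + (2 * \<alpha> * \<beta> * \<kappa> + 2 * \<beta> * a) + mu * (2 * \<alpha> * sqrt b * \<kappa>) powr q"

lemma cRinv_nonneg: "cRinv \<ge> 0"
  unfolding cRinv_def using alpha_pos bconst_nonneg P0_pos astar_nonneg p_gt_3 kappa_pos beta_bounds mu_pos
  by (intro add_nonneg_nonneg mult_nonneg_nonneg) auto

lemma abs_R_le_inverse: "\<bar>R y s\<bar> \<le> cRinv / s" if s: "s \<ge> 1"
proof -
  have s0: "s > 0" using s by simp
  have "\<bar>- 2 * \<alpha> * b * \<sigma> s * P y s\<bar> = 2 * \<alpha> * b * (\<sigma> s * P y s)"
    using alpha_pos bconst_nonneg sigma_pos[OF s0] P_pos[OF s0, of y] by (simp add: abs_mult)
  also have "\<dots> \<le> 2 * \<alpha> * b * ((1 / s) * P0)"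
    using alpha_pos bconst_nonneg sigma_le_inverse[OF s] P_pos[OF s0, of y] P_le_P0[OF s0, of y] s0
    by (intro mult_left_mono mult_mono) auto
  finally have t1: "\<bar>- 2 * \<alpha> * b * \<sigma> s * P y s\<bar> \<le> 2 * \<alpha> * b * P0 / s" by simp
  have "\<alpha> * a * \<sigma> s \<le> \<alpha> * a * (1 / s)"
    using alpha_pos astar_nonneg sigma_le_inverse[OF s] by (intro mult_left_mono) auto
  then have t3: "\<bar>\<alpha> * a * \<sigma> s\<bar> \<le> \<alpha> * a / s"
    using alpha_pos astar_nonneg sigma_pos[OF s0] by (simp add: abs_mult)
  have "\<bar>R y s\<bar> \<le> \<bar>- 2 * \<alpha> * b * \<sigma> s * P y s\<bar> + \<bar>T1 y s\<bar> + \<bar>\<alpha> * a * \<sigma> s\<bar>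
      + \<bar>phi p mu y s powr p - P y s\<bar> + \<bar>phi_s y s\<bar> + mu * \<bar>phi_y y s\<bar> powr q"
    unfolding R_eq_global_terms[OF s0] using mu_pos by (smt (verit) powr_ge_zero mult_nonneg_nonneg)
  also have "\<dots> \<le> cRinv / s"
    using t1 abs_T1_le_inverse[OF s, of y] t3 abs_phi_powr_p_diff_le[OF s, of y]
      abs_phi_s_le[OF s, of y] phi_y_powr_q_le[OF s, of y]
    unfolding cRinv_def by (simp add: add_divide_distrib)
  finally show ?thesis .
qed

lemma Vpot_eq: "Vpot p mu y s = p * (phi p mu y s powr (p - 1) - \<alpha>)"
  by (simp add: Vpot_def \<alpha>_def algebra_simps)

lemma phi_powr_p_minus_1_le: "phi p mu y s powr (p - 1) \<le> (\<kappa> + a) powr (p - 1)" if "s \<ge> 1"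
  unfolding phi_eq F_def[symmetric]
  using F_pos[of s y] F_le_kappa[of s y] astar_nonneg sigma_pos[of s] p_gt_3 astar_sigma_le[OF that] that
  by (intro powr_mono2) auto

lemma abs_Vpot_le: "\<bar>Vpot p mu y s\<bar> \<le> p * ((\<kappa> + a) powr (p - 1) + \<alpha>)" if "s \<ge> 1"
proof -
  have "\<bar>phi p mu y s powr (p - 1) - \<alpha>\<bar> \<le> (\<kappa> + a) powr (p - 1) + \<alpha>"
    using phi_powr_p_minus_1_le[OF that, of y] alpha_pos powr_ge_zero[of "phi p mu y s" "p - 1"]
    by (simp only: abs_le_iff) linarith
  then show ?thesis
    unfolding Vpot_eq using p_gt_3 by (simp add: abs_mult)
qed

lemma abs_Vpot_le_decay:
  "\<bar>Vpot p mu y s\<bar> \<le> p * (a * (p - 1) * (\<kappa> + a) powr (p - 2) + cG * b) * (1 + y^2) * \<sigma> s"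
  if "s \<ge> 1"
proof -
  have s: "s > 0" using that by simp
  define A where "A = a * (p - 1) * (\<kappa> + a) powr (p - 2)"
  have A: "0 \<le> A" unfolding A_def using astar_nonneg p_gt_3 by simp
  have phi: "phi p mu y s = F y s + a * \<sigma> s"
    by (simp add: phi_eq F_def)
  have "0 \<le> (F y s + a * \<sigma> s) powr (p - 1) - F y s powr (p - 1)"
    "(F y s + a * \<sigma> s) powr (p - 1) - F y s powr (p - 1)
       \<le> (F y s + a * \<sigma> s - F y s) * (p - 1) * (F y s + a * \<sigma> s) powr (p - 1 - 1)"
    using F_pos[OF s, of y] astar_nonneg sigma_pos[OF s] p_gt_3 by (intro powr_diff_le; simp)+
  moreover have "(F y s + a * \<sigma> s) powr (p - 1 - 1) \<le> (\<kappa> + a) powr (p - 2)"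
    using F_pos[OF s, of y] F_le_kappa[OF s, of y] astar_nonneg sigma_pos[OF s] p_gt_3
      astar_sigma_le[OF that]
    by (auto intro: powr_mono2)
  then have "(a * \<sigma> s) * (p - 1) * (F y s + a * \<sigma> s) powr (p - 1 - 1)
      \<le> (a * \<sigma> s) * (p - 1) * (\<kappa> + a) powr (p - 2)"
    using astar_nonneg sigma_pos[OF s] p_gt_3 by (intro mult_left_mono) auto
  then have "(a * \<sigma> s) * (p - 1) * (F y s + a * \<sigma> s) powr (p - 1 - 1) \<le> A * \<sigma> s"
    by (simp add: A_def algebra_simps)
  ultimately have taylor: "\<bar>phi p mu y s powr (p - 1) - F y s powr (p - 1)\<bar> \<le> A * \<sigma> s"
    unfolding phi by simp
  have lipschitz: "\<bar>F y s powr (p - 1) - \<alpha>\<bar> \<le> cG * b * y^2 * \<sigma> s"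
    using abs_inverse_G_diff_le[OF s, of y] unfolding F_powr_p_minus_1[OF s]
    by (simp add: W_def algebra_simps)
  have "\<bar>Vpot p mu y s\<bar> \<le> p * (A * \<sigma> s + cG * b * y^2 * \<sigma> s)"
    unfolding Vpot_eq using taylor lipschitz p_gt_3 by (simp add: abs_mult)
  also have "\<dots> \<le> p * ((A + cG * b) * (1 + y^2) * \<sigma> s)"
    using A lipschitz_constants_nonneg bconst_nonneg sigma_pos[OF s] p_gt_3
    by (intro mult_left_mono) (auto simp: algebra_simps)
  finally show ?thesis
    by (simp add: A_def mult.assoc)
qed

lemma borel_measurable_R: "(\<lambda>y. R y s) \<in> borel_measurable lborel"
  unfolding R_def phi_yy_def phi_y_def phi_s_def phi_def G_def W_def \<sigma>_def by measurable

lemma borel_measurable_M: "M \<in> borel_measurable lborel"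
  unfolding M_def[abs_def] by measurable

lemma borel_measurable_E: "(\<lambda>y. E y s) \<in> borel_measurable lborel" if "s > 0"
proof -
  have "(\<lambda>y. E y s) = (\<lambda>y. R y s - \<tau> s * M y)"
    using R_eq_tau_M_plus_E[OF that] by (auto simp: algebra_simps)
  then show ?thesis
    using borel_measurable_R[of s] borel_measurable_M by simp
qed

definition "cR = 2 * cM + 2 * cE1 + cE2"

lemma cR_nonneg: "cR \<ge> 0"
  using cM_nonneg E_constants_nonneg by (simp add: cR_def)

lemma abs_R_le_power4: "\<bar>R y s\<bar> \<le> cR * \<tau> s * (1 + y^4)" if s: "s \<ge> 1"
proof -
  have s0: "s > 0" using s by simp
  have "\<tau> s * \<bar>M y\<bar> \<le> \<tau> s * (2 * cM * (1 + y^4))"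
    using abs_M_le_power4(1) tau_pos[OF s0] by (intro mult_left_mono) auto
  moreover have "(2 * cE1 + cE2) * (\<sigma> s)^2 * (1 + y^4) \<le> (2 * cE1 + cE2) * \<tau> s * (1 + y^4)"
    using sigma_sq_le_tau[OF s] E_constants_nonneg by (intro mult_right_mono mult_left_mono) auto
  ultimately show ?thesis
    using abs_R_le_tau_M_E[OF s0, of y] abs_E_le_power4[OF s, of y] by (simp add: cR_def algebra_simps)
qed

definition "cV = p * ((\<kappa> + a) powr (p - 1) + \<alpha>) + p * (a * (p - 1) * (\<kappa> + a) powr (p - 2) + cG * b)"

lemma Linf_le_Vpot: "Linf_le (\<lambda>y. Vpot p mu y s) cV" if "s \<ge> 1"
proof -
  have "0 \<le> p * (a * (p - 1) * (\<kappa> + a) powr (p - 2) + cG * b)"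
    using p_gt_3 astar_nonneg lipschitz_constants_nonneg bconst_nonneg by simp
  then show ?thesis
    unfolding Linf_le_def cV_def using abs_Vpot_le[OF that]
    by (intro AE_I2) (meson add_increasing2 order_trans)
qed

lemma abs_Vpot_le_powr: "\<bar>Vpot p mu y s\<bar> \<le> cV * (1 + y^2) / s powr (2 * \<beta>)" if s: "s \<ge> 1"
proof -
  have "0 \<le> p * ((\<kappa> + a) powr (p - 1) + \<alpha>)"
    using p_gt_3 alpha_pos by simp
  then have "p * (a * (p - 1) * (\<kappa> + a) powr (p - 2) + cG * b) * (1 + y^2) * \<sigma> s
      \<le> cV * (1 + y^2) * \<sigma> s"
    unfolding cV_def using sigma_pos[of s] s by (intro mult_right_mono) auto
  moreover have "\<sigma> s = 1 / s powr (2 * \<beta>)"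
    by (simp add: \<sigma>_def powr_minus divide_simps)
  ultimately show ?thesis
    using abs_Vpot_le_decay[OF s, of y] by simp
qed

section \<open>The choice of the constant \<open>b\<close>\<close>

definition "J = (LINT y|lborel. \<bar>y\<bar> powr q * rho y)"

lemma J_ge: "J \<ge> 1/4"
proof -
  have lower: "rho y * y^2 / 2 - rho y * y^4 / 16 \<le> \<bar>y\<bar> powr q * rho y" for y
  proof -
    have "y^2 / 2 - y^4 / 16 \<le> \<bar>y\<bar> powr q"
    proof (cases "\<bar>y\<bar> \<le> 1")
      case True
      then have "\<bar>y\<bar> powr 2 \<le> \<bar>y\<bar> powr q"
        using q_bounds by (intro powr_mono') auto
      then have "y^2 \<le> \<bar>y\<bar> powr q"
        by (simp add: powr_numeral)
      moreover have "0 \<le> y^4" "0 \<le> y^2" by simp_all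
      ultimately show ?thesis by linarith
    next
      case False
      have "1 \<le> \<bar>y\<bar> powr q"
        using False q_bounds by (intro ge_one_powr_ge_zero) auto
      moreover have "0 \<le> (y^2 - 4)^2" by simp
      then have "y^2 / 2 - y^4 / 16 \<le> 1"
        by (simp add: power2_eq_square power4_eq_xxxx algebra_simps)
      ultimately show ?thesis by simp
    qed
    then show ?thesis
      using rho_pos[of y] by (smt (verit) mult_right_mono left_diff_distrib mult.commute times_divide_eq_left)
  qed
  have "(LINT y|lborel. rho y * y^2 / 2 - rho y * y^4 / 16) = 2/2 - 12/16"
    using integrable_rho_power[of 2] integrable_rho_power[of 4]
    by (simp add: integral_rho_power2 integral_rho_power4)
  moreover have "(LINT y|lborel. rho y * y^2 / 2 - rho y * y^4 / 16) \<le> J"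
    unfolding J_def using integrable_rho_power[of 2] integrable_rho_power[of 4]
      integrable_abs_powr_rho[of q] q_bounds lower
    by (intro integral_mono) auto
  ultimately show ?thesis by simp
qed

definition "X = sqrt (4 * pi) * (p + 1)^2 / (p * (LINT y|lborel. \<bar>y\<bar> powr q * exp (- (y^2) / 4)))"

lemma X_eq: "X = (p + 1)^2 / (p * J)"
proof -
  have "(\<lambda>y. \<bar>y\<bar> powr q * exp (- (y^2) / 4)) = (\<lambda>y. sqrt (4 * pi) * (\<bar>y\<bar> powr q * rho y))"
    by (auto simp: rho_def)
  then show ?thesis
    by (simp add: X_def J_def)
qed

lemma X_pos: "X > 0"
  using p_gt_3 J_ge by (simp add: X_eq)

lemma astar_eq_powr: "a = (X / ((p - 1) * mu)) powr ((p + 1) / (p - 1))"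
proof -
  define e where "e = (p + 1) / (p - 1)"
  have pm: "p - 1 > 0" using p_gt_3 by simp
  have b_eq: "b = 1/2 * (p - 1) powr ((p - 2) / (p - 1)) * X powr ((p + 1) / (p - 1))
      * mu powr (- (p + 1) / (p - 1))"
    by (simp add: bconst_def X_def)
  have minus_e: "- (p + 1) / (p - 1) = - e"
    unfolding e_def by (rule minus_divide_left[symmetric])
  have sq: "(p - 1)^2 = (p - 1) powr 2"
    using pm by (simp add: powr_numeral)
  have "a = (p - 1) powr ((p - 2) / (p - 1)) * (p - 1) powr (- 1 / (p - 1)) / (p - 1) powr 2
      * X powr e * mu powr (- e)"
    unfolding astar_def b_eq kappa_def sq minus_e e_def[symmetric] by (simp add: field_simps)
  also have "(p - 1) powr ((p - 2) / (p - 1)) * (p - 1) powr (- 1 / (p - 1)) / (p - 1) powr 2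
      = (p - 1) powr ((p - 2) / (p - 1) + (- 1 / (p - 1)) + (- 2))"
  proof -
    have "(p - 1) powr ((p - 2) / (p - 1) + (- 1 / (p - 1)) + (- 2))
       = (p - 1) powr ((p - 2) / (p - 1)) * (p - 1) powr (- 1 / (p - 1)) * (p - 1) powr (- 2)"
      by (simp only: powr_add)
    also have "(p - 1) powr (- 2) = 1 / (p - 1) powr 2"
      by (simp add: powr_minus divide_simps)
    finally show ?thesis by simp
  qed
  also have "(p - 2) / (p - 1) + (- 1 / (p - 1)) + (- 2) = - e"
    using p_gt_3 by (simp add: e_def divide_simps)
  finally have "a = (p - 1) powr (- e) * X powr e * mu powr (- e)" .
  also have "\<dots> = (X / ((p - 1) * mu)) powr e"
    using pm mu_pos X_pos by (simp add: powr_divide powr_mult powr_minus divide_simps)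
  finally show ?thesis
    unfolding e_def .
qed

lemma astar_pos: "a > 0"
  using astar_eq_powr X_pos p_gt_3 mu_pos by simp

text \<open>This is the identity that fixes the constant \<open>b\<close>: it is equivalent to
  \<open>\<integral> M h\<^sub>2 \<rho> = 0\<close>, see the next lemma.\<close>
lemma mu_astar_powr_q_J: "mu * a powr q * q * J = 4 * \<beta> * a"
proof -
  have pm: "p - 1 > 0" "p + 1 > 0" using p_gt_3 by auto
  have "(p + 1) / (p - 1) * (q - 1) = 1"
    using p_gt_3 by (simp add: qexp_def divide_simps)
  then have aq: "a powr (q - 1) = X / ((p - 1) * mu)"
    unfolding astar_eq_powr powr_powr using X_pos mu_pos pm by simp
  have "mu * a powr (q - 1) * q * J = (p + 1)^2 * q / (p * (p - 1))"
    unfolding aq X_eq using mu_pos pm J_ge by (simp add: field_simps)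
  also have "\<dots> = 4 * \<beta>"
    using p_gt_3 unfolding qexp_def betaexp_def
    by (simp add: divide_simps) (simp add: algebra_simps power2_eq_square)
  finally show ?thesis
    using astar_pos powr_add[of a 1 "q - 1"] by (simp add: algebra_simps)
qed

lemma integral_M_herm2_rho: "(LINT y|lborel. M y * herm 2 y * rho y) = 0"
proof -
  have q: "0 \<le> q" "q \<le> 2" using q_bounds by auto
  define c where "c = mu * a powr q"
  have "(\<lambda>y. M y * herm 2 y * rho y) = (\<lambda>y. (4 * \<beta> * a) * (rho y * y^2) + (- 4 * \<beta> * a) * rho y
     + (- \<beta> * a) * (rho y * y^4) + c * (y^2 * \<bar>y\<bar> powr q * rho y) + (- 2 * c) * (\<bar>y\<bar> powr q * rho y))"
    by (auto simp: M_def herm_eq c_def algebra_simps power2_eq_square power4_eq_xxxx)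
  moreover have "(LINT y|lborel. y^2 * \<bar>y\<bar> powr q * rho y) = 2 * (q + 1) * J"
    unfolding J_def using q_bounds by (intro integral_sq_abs_powr_rho) auto
  ultimately have "(LINT y|lborel. M y * herm 2 y * rho y) = (4 * \<beta> * a) * 2 + (- 4 * \<beta> * a) * 1
     + (- \<beta> * a) * 12 + c * (2 * (q + 1) * J) + (- 2 * c) * J"
    using integrable_rho_power[of 0] integrable_rho_power[of 2] integrable_rho_power[of 4]
      integrable_sq_abs_powr_rho[OF q] integrable_abs_powr_rho[OF q]
    by (simp add: integral_rho integral_rho_power2 integral_rho_power4 J_def[symmetric])
  also have "\<dots> = - 8 * \<beta> * a + 2 * (c * q * J)"
    by (simp add: algebra_simps)
  also have "c * q * J = 4 * \<beta> * a"
    using mu_astar_powr_q_J by (simp add: c_def)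
  finally show ?thesis by simp
qed

lemma integral_M_kherm2_rho: "(LINT y|lborel. M y * kherm 2 y * rho y) = 0"
proof -
  have "(\<lambda>y. M y * kherm 2 y * rho y)
      = (\<lambda>y. (M y * herm 2 y * rho y) / (LINT z|lborel. (herm 2 z)^2 * rho z))"
    by (auto simp: kherm_def)
  then show ?thesis
    using integral_M_herm2_rho by simp
qed

end


section \<open>Projection of the error on the Hermite modes\<close>

lemma Linf_le_mono: "Linf_le f c \<Longrightarrow> c \<le> c' \<Longrightarrow> Linf_le f c'"
  unfolding Linf_le_def by (auto elim: AE_mp)

lemma vartheta_mono:
  assumes "0 \<le> A" "A \<le> A'"
  shows "vartheta chi0 K p gam A s \<subseteq> vartheta chi0 K p gam A' s"
proof -
  have "A^2 * s powr (- (gam - 3 * betaexp p)) \<le> A'^2 * s powr (- (gam - 3 * betaexp p))"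
    "A * s powr (- gam) \<le> A' * s powr (- gam)"
    "A * s powr (- (2 * betaexp p + 1)) \<le> A' * s powr (- (2 * betaexp p + 1))"
    "sqrt A * s powr (- (4 * betaexp p - 1)) \<le> sqrt A' * s powr (- (4 * betaexp p - 1))"
    using assms by (auto intro!: mult_right_mono power_mono)
  then show ?thesis
    unfolding vartheta_def by (auto elim!: Linf_le_mono intro: order_trans)
qed

lemma vartheta_memI:
  fixes r :: "real \<Rightarrow> real"
  assumes "r \<in> borel_measurable lborel"
    and "\<And>y. 0 \<le> cutoff chi0 K p y s" "\<And>y. cutoff chi0 K p y s \<le> 1"
    and "\<And>y. \<bar>r y\<bar> \<le> A^2 * s powr (- (gam - 3 * betaexp p))"
    and "\<And>y. \<bar>rpart_minus chi0 K p s r y\<bar> \<le> A * s powr (- gam) * (1 + \<bar>y\<bar>^3)"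
    and "\<bar>rcoef chi0 K p s r 0\<bar> \<le> A * s powr (- (2 * betaexp p + 1))"
    and "\<bar>rcoef chi0 K p s r 1\<bar> \<le> A * s powr (- (2 * betaexp p + 1))"
    and "\<bar>rcoef chi0 K p s r 2\<bar> \<le> sqrt A * s powr (- (4 * betaexp p - 1))"
  shows "r \<in> vartheta chi0 K p gam A s"
proof -
  have "\<bar>rpart_e chi0 K p s r y\<bar> \<le> \<bar>r y\<bar>" for y
    using assms(2,3)[of y] by (simp add: rpart_e_def abs_mult mult_left_le_one_le)
  moreover have "\<bar>rpart_minus chi0 K p s r y / (1 + \<bar>y\<bar>^3)\<bar> \<le> A * s powr (- gam)" for y
  proof -
    have "0 < 1 + \<bar>y\<bar>^3" by (smt (verit) zero_le_power abs_ge_zero)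
    then show ?thesis
      using assms(5)[of y] by (simp add: abs_divide divide_le_eq)
  qed
  ultimately show ?thesis
    unfolding vartheta_def Linf_def Linf_le_def mem_Collect_eq using assms(1,4,6-8)
    by (intro conjI exI[of _ "A^2 * s powr (- (gam - 3 * betaexp p))"] AE_I2)
       (auto intro: order_trans)
qed

locale blowup_profile_cutoff = blowup_profile +
  fixes chi0 :: "real \<Rightarrow> real" and K :: real
  assumes chi0_continuous: "continuous_on UNIV chi0"
    and chi0_range: "\<forall>x\<ge>0. 0 \<le> chi0 x \<and> chi0 x \<le> 1"
    and chi0_eq_1: "\<forall>x. 0 \<le> x \<and> x \<le> 1 \<longrightarrow> chi0 x = 1"
    and chi0_eq_0: "\<forall>x>2. chi0 x = 0"
    and K_ge_6: "K \<ge> 6"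
begin

abbreviation "chi y s \<equiv> cutoff chi0 K p y s"

lemma cutoff_scale_pos: "K * s powr \<beta> > 0" if "s > 0"
  using K_ge_6 that by simp

lemma cutoff_range: "0 \<le> chi y s" "chi y s \<le> 1" if "s > 0"
  unfolding cutoff_def using chi0_range cutoff_scale_pos[OF that] by simp_all

lemma abs_cutoff_mult_le: "\<bar>chi y s * x\<bar> \<le> \<bar>x\<bar>" "\<bar>(1 - chi y s) * x\<bar> \<le> \<bar>x\<bar>" if "s > 0"
  using cutoff_range[OF that, of y] by (simp_all add: abs_mult mult_left_le_one_le)

lemma cutoff_eq_1: "chi y s = 1" if "s > 0" "\<bar>y\<bar> \<le> K * s powr \<beta>"
  unfolding cutoff_def using chi0_eq_1 cutoff_scale_pos[OF that(1)] that(2) by (simp add: divide_le_eq)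

lemma cutoff_eq_0: "chi y s = 0" if "s > 0" "\<bar>y\<bar> > 2 * K * s powr \<beta>"
  unfolding cutoff_def using chi0_eq_0 cutoff_scale_pos[OF that(1)] that(2)
  by (simp add: less_divide_eq mult.assoc)

lemma borel_measurable_cutoff: "(\<lambda>y. chi y s) \<in> borel_measurable lborel"
proof -
  have [measurable]: "chi0 \<in> borel_measurable borel"
    by (rule borel_measurable_continuous_onI[OF chi0_continuous])
  show ?thesis unfolding cutoff_def by measurable
qed

lemma one_minus_cutoff_le: "1 - chi y s \<le> y^2 / (K * s powr \<beta>)^2" if "s > 0"
proof (cases "\<bar>y\<bar> \<le> K * s powr \<beta>")
  case True
  then show ?thesis using cutoff_eq_1[OF that True] by simp
next
  case False
  then have "(K * s powr \<beta>)^2 \<le> y^2"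
    using cutoff_scale_pos[OF that] by (metis abs_le_square_iff abs_of_pos less_le_not_le nle_le)
  moreover have "(K * s powr \<beta>)^2 > 0"
    by (rule zero_less_power[OF cutoff_scale_pos[OF that]])
  ultimately have "1 \<le> y^2 / (K * s powr \<beta>)^2"
    by (simp add: le_divide_eq)
  then show ?thesis using cutoff_range[OF that, of y] by linarith
qed

lemma tau_div_cutoff_scale_le: "\<tau> s / (K * s powr \<beta>)^2 \<le> (\<sigma> s)^2" if "s \<ge> 1"
proof -
  have s: "s > 0" using that by simp
  have "(K * s powr \<beta>)^2 = K^2 * s powr (2 * \<beta>)"
    using s by (simp add: power_mult_distrib powr_add[symmetric] power2_eq_square)
  moreover have "\<sigma> s * s powr (2 * \<beta>) = 1"
    using s by (simp add: \<sigma>_def powr_add[symmetric])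
  ultimately have "\<tau> s / (K * s powr \<beta>)^2 = (\<sigma> s)^2 / (s * K^2)"
    using s K_ge_6 by (simp add: \<tau>_def field_simps power2_eq_square)
  also have "\<dots> \<le> (\<sigma> s)^2"
  proof -
    have "1 \<le> K^2" using K_ge_6 by (simp add: one_le_power)
    then have "1 \<le> s * K^2"
      using that by (metis mult_mono mult_1_right order.trans zero_le_one)
    then show ?thesis by (simp add: divide_le_eq mult_le_cancel_left1)
  qed
  finally show ?thesis .
qed

lemma rcoef_Rerr_eq:
  "rcoef chi0 K p s (\<lambda>y. Rerr p mu y s) m = (LINT y|lborel. (chi y s * R y s) * kherm m y * rho y)"
  if "s > 0"
  using that by (simp add: rcoef_def rpart_b_def Rerr_eq)

lemma borel_measurable_cutoff_R: "(\<lambda>y. chi y s * R y s) \<in> borel_measurable lborel"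
  using borel_measurable_cutoff borel_measurable_R by measurable

lemma abs_rcoef_le: "\<bar>rcoef chi0 K p s (\<lambda>y. Rerr p mu y s) m\<bar> \<le> cR * kherm_weight m * \<tau> s"
  if s: "s \<ge> 1"
proof -
  have s0: "s > 0" using s by simp
  have "\<bar>chi y s * R y s\<bar> \<le> (cR * \<tau> s) * (1 + y^4)" for y
    using abs_cutoff_mult_le(1)[OF s0, of y "R y s"] abs_R_le_power4[OF s, of y] by simp
  then have "\<bar>LINT y|lborel. (chi y s * R y s) * kherm m y * rho y\<bar> \<le> (cR * \<tau> s) * kherm_weight m"
    by (rule abs_integral_kherm_rho_le(2)[OF borel_measurable_cutoff_R])
  then show ?thesis
    by (simp add: rcoef_Rerr_eq[OF s0] mult_ac)
qed

lemma abs_tail_M_le: "\<bar>(1 - chi y s) * M y\<bar> \<le> (2 * cM / (K * s powr \<beta>)^2) * (1 + y^4)" if "s > 0"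
proof -
  have "\<bar>(1 - chi y s) * M y\<bar> = (1 - chi y s) * \<bar>M y\<bar>"
    using cutoff_range[OF that, of y] by (simp add: abs_mult)
  also have "\<dots> \<le> (y^2 / (K * s powr \<beta>)^2) * \<bar>M y\<bar>"
    using one_minus_cutoff_le[OF that, of y] by (intro mult_right_mono) auto
  also have "\<dots> \<le> (2 * cM / (K * s powr \<beta>)^2) * (1 + y^4)"
    using abs_M_le_power4(2)[of y] zero_less_power[OF cutoff_scale_pos[OF that], of 2]
    by (simp add: divide_right_mono)
  finally show ?thesis .
qed

text \<open>Since \<open>\<integral> M k\<^sub>2 \<rho> = 0\<close>, only the part of \<open>\<tau> M\<close> cut away by \<open>chi\<close> contributes to the
  second coefficient.\<close>
lemma rcoef2_eq:
  "rcoef chi0 K p s (\<lambda>y. Rerr p mu y s) 2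
     = - \<tau> s * (LINT y|lborel. (1 - chi y s) * M y * kherm 2 y * rho y)
       + (LINT y|lborel. chi y s * E y s * kherm 2 y * rho y)" if s: "s \<ge> 1"
proof -
  have s0: "s > 0" using s by simp
  have "(\<lambda>y. (1 - chi y s) * M y) \<in> borel_measurable lborel"
    "(\<lambda>y. chi y s * E y s) \<in> borel_measurable lborel"
    using borel_measurable_cutoff borel_measurable_M borel_measurable_E[OF s0] by measurable
  moreover have "\<bar>(1 - chi y s) * M y\<bar> \<le> (2 * cM) * (1 + y^4)"
    "\<bar>chi y s * E y s\<bar> \<le> ((2 * cE1 + cE2) * (\<sigma> s)^2) * (1 + y^4)" for y
    using order_trans[OF abs_cutoff_mult_le(2)[OF s0, of y] abs_M_le_power4(1)[of y]]
      order_trans[OF abs_cutoff_mult_le(1)[OF s0, of y] abs_E_le_power4[OF s, of y]]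
    by simp_all
  ultimately have integrable:
    "integrable lborel (\<lambda>y. M y * kherm 2 y * rho y)"
    "integrable lborel (\<lambda>y. (1 - chi y s) * M y * kherm 2 y * rho y)"
    "integrable lborel (\<lambda>y. chi y s * E y s * kherm 2 y * rho y)"
    using abs_integral_kherm_rho_le(1)[OF borel_measurable_M abs_M_le_power4(1)]
      abs_integral_kherm_rho_le(1) by blast+
  have integrand: "(chi y s * R y s) * kherm 2 y * rho y
      = \<tau> s * (M y * kherm 2 y * rho y) - \<tau> s * ((1 - chi y s) * M y * kherm 2 y * rho y)
        + chi y s * E y s * kherm 2 y * rho y" for y
    unfolding R_eq_tau_M_plus_E[OF s0] by (simp add: algebra_simps)
  show ?thesis
    unfolding rcoef_Rerr_eq[OF s0] integrand using integrable by (simp add: integral_M_kherm2_rho)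
qed

lemma abs_rcoef2_le: "\<bar>rcoef chi0 K p s (\<lambda>y. Rerr p mu y s) 2\<bar> \<le> cR * kherm_weight 2 * (\<sigma> s)^2"
  if s: "s \<ge> 1"
proof -
  have s0: "s > 0" using s by simp
  have "(\<lambda>y. (1 - chi y s) * M y) \<in> borel_measurable lborel"
    "(\<lambda>y. chi y s * E y s) \<in> borel_measurable lborel"
    using borel_measurable_cutoff borel_measurable_M borel_measurable_E[OF s0] by measurable
  moreover have "\<bar>chi y s * E y s\<bar> \<le> ((2 * cE1 + cE2) * (\<sigma> s)^2) * (1 + y^4)" for y
    using order_trans[OF abs_cutoff_mult_le(1)[OF s0, of y] abs_E_le_power4[OF s, of y]] by simp
  ultimately have tail: "\<bar>LINT y|lborel. (1 - chi y s) * M y * kherm 2 y * rho y\<bar>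
        \<le> (2 * cM / (K * s powr \<beta>)^2) * kherm_weight 2"
    and inner: "\<bar>LINT y|lborel. chi y s * E y s * kherm 2 y * rho y\<bar>
        \<le> ((2 * cE1 + cE2) * (\<sigma> s)^2) * kherm_weight 2"
    using abs_integral_kherm_rho_le(2) abs_tail_M_le[OF s0] by blast+
  have "\<bar>rcoef chi0 K p s (\<lambda>y. Rerr p mu y s) 2\<bar>
      \<le> \<tau> s * \<bar>LINT y|lborel. (1 - chi y s) * M y * kherm 2 y * rho y\<bar>
        + \<bar>LINT y|lborel. chi y s * E y s * kherm 2 y * rho y\<bar>"
    unfolding rcoef2_eq[OF s] using tau_pos[OF s0]
      abs_triangle_ineq[of "- \<tau> s * (LINT y|lborel. (1 - chi y s) * M y * kherm 2 y * rho y)"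
        "LINT y|lborel. chi y s * E y s * kherm 2 y * rho y"]
    by (simp add: abs_mult)
  also have "\<dots> \<le> 2 * cM * kherm_weight 2 * (\<tau> s / (K * s powr \<beta>)^2)
      + (2 * cE1 + cE2) * kherm_weight 2 * (\<sigma> s)^2"
    using mult_left_mono[OF tail, of "\<tau> s"] inner tau_pos[OF s0] by (simp add: algebra_simps)
  also have "\<dots> \<le> 2 * cM * kherm_weight 2 * (\<sigma> s)^2 + (2 * cE1 + cE2) * kherm_weight 2 * (\<sigma> s)^2"
    using tau_div_cutoff_scale_le[OF s] cM_nonneg kherm_weight_nonneg
    by (intro add_right_mono mult_left_mono) auto
  finally show ?thesis
    by (simp add: cR_def algebra_simps)
qed

lemma decay_le_powr_gamma:
  assumes "gam \<le> 2 * \<beta> + 1" "s \<ge> 1"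
  shows "\<tau> s \<le> s powr (- gam)" "(\<sigma> s)^2 \<le> s powr (- gam)"
    and "(\<sigma> s)^2 * s powr \<beta> / s \<le> s powr (- gam)"
proof -
  have s: "s > 0" using assms(2) by simp
  show "\<tau> s \<le> s powr (- gam)"
    unfolding tau_eq_powr[OF s] using assms by (intro powr_mono) auto
  show "(\<sigma> s)^2 \<le> s powr (- gam)"
    unfolding sigma_sq_eq_powr[OF s] using assms beta_bounds by (intro powr_mono) auto
  have "(\<sigma> s)^2 * s powr \<beta> / s = s powr (- 4 * \<beta>) * s powr \<beta> / s powr 1"
    using s by (simp add: sigma_sq_eq_powr)
  also have "\<dots> = s powr (- 4 * \<beta> + \<beta> - 1)"
    by (simp only: powr_diff powr_add)
  also have "\<dots> \<le> s powr (- gam)"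
    using assms beta_bounds by (intro powr_mono) auto
  finally show "(\<sigma> s)^2 * s powr \<beta> / s \<le> s powr (- gam)" .
qed

definition "cD = 2 * cM + 2 * cE1 + 2 * K * cE2"

lemma cD_nonneg: "cD \<ge> 0"
  using cM_nonneg E_constants_nonneg K_ge_6 by (simp add: cD_def)

text \<open>On the support of the cut-off \<open>\<bar>y\<bar> \<le> 2 K s^\<beta>\<close>, hence \<open>y^4 \<le> 2 K s^\<beta> \<bar>y\<bar>^3\<close>; this is what
  converts the \<open>y^4/s\<close> part of \<open>E\<close> into the weight \<open>1 + \<bar>y\<bar>^3\<close>.\<close>
lemma abs_R_le_on_cutoff_support:
  "\<bar>R y s\<bar> \<le> (2 * cM * \<tau> s + 2 * cE1 * (\<sigma> s)^2 + 2 * K * cE2 * ((\<sigma> s)^2 * s powr \<beta> / s))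
      * (1 + \<bar>y\<bar>^3)"
  if s: "s \<ge> 1" and y: "\<bar>y\<bar> \<le> 2 * K * s powr \<beta>"
proof -
  have s0: "s > 0" using s by simp
  have y3: "0 \<le> \<bar>y\<bar>^3" by simp
  have "y^4 = \<bar>y\<bar> * \<bar>y\<bar>^3"
    by (simp add: power_even_abs_numeral flip: power_Suc)
  also have "\<dots> \<le> (2 * K * s powr \<beta>) * (1 + \<bar>y\<bar>^3)"
    using y y3 by (intro mult_mono) auto
  finally have "cE2 * y^4 / s \<le> cE2 * ((2 * K * s powr \<beta>) * (1 + \<bar>y\<bar>^3)) / s"
    using E_constants_nonneg s0 by (intro divide_right_mono mult_left_mono) auto
  then have y4: "cE2 * y^4 / s \<le> 2 * K * cE2 * (s powr \<beta> / s) * (1 + \<bar>y\<bar>^3)"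
    by (simp add: algebra_simps)
  have "cE1 * (1 + y^2) + cE2 * y^4 / s
      \<le> 2 * cE1 * (1 + \<bar>y\<bar>^3) + 2 * K * cE2 * (s powr \<beta> / s) * (1 + \<bar>y\<bar>^3)"
  proof (rule add_mono[OF _ y4])
    show "cE1 * (1 + y^2) \<le> 2 * cE1 * (1 + \<bar>y\<bar>^3)"
      using mult_left_mono[OF one_plus_sq_le(2) E_constants_nonneg(1)] by (simp add: algebra_simps)
  qed
  then have "\<bar>E y s\<bar>
      \<le> (\<sigma> s)^2 * (2 * cE1 * (1 + \<bar>y\<bar>^3) + 2 * K * cE2 * (s powr \<beta> / s) * (1 + \<bar>y\<bar>^3))"
    using abs_E_le[OF s, of y] by (meson mult_left_mono order_trans zero_le_power2)
  moreover have "\<bar>M y\<bar> \<le> 2 * cM * (1 + \<bar>y\<bar>^3)"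
    using order_trans[OF abs_M_le mult_left_mono[OF one_plus_sq_le(2) cM_nonneg]]
    by (simp add: algebra_simps)
  then have "\<tau> s * \<bar>M y\<bar> \<le> \<tau> s * (2 * cM * (1 + \<bar>y\<bar>^3))"
    using tau_pos[OF s0] by (intro mult_left_mono) auto
  ultimately show ?thesis
    using abs_R_le_tau_M_E[OF s0, of y] by (simp add: algebra_simps)
qed

lemma abs_cutoff_R_le: "\<bar>chi y s * R y s\<bar> \<le> cD * s powr (- gam) * (1 + \<bar>y\<bar>^3)"
  if gam: "gam \<le> 2 * \<beta> + 1" and s: "s \<ge> 1"
proof (cases "\<bar>y\<bar> \<le> 2 * K * s powr \<beta>")
  case False
  then show ?thesis
    using cutoff_eq_0[of s y] s cD_nonneg by simp
next
  case True
  have "\<bar>chi y s * R y s\<bar> \<le> \<bar>R y s\<bar>"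
    using abs_cutoff_mult_le(1) s by simp
  also have "\<dots> \<le> (2 * cM * \<tau> s + 2 * cE1 * (\<sigma> s)^2 + 2 * K * cE2 * ((\<sigma> s)^2 * s powr \<beta> / s))
      * (1 + \<bar>y\<bar>^3)"
    by (rule abs_R_le_on_cutoff_support[OF s True])
  also have "\<dots> \<le> (2 * cM * s powr (- gam) + 2 * cE1 * s powr (- gam) + 2 * K * cE2 * s powr (- gam))
      * (1 + \<bar>y\<bar>^3)"
    using decay_le_powr_gamma[OF gam s] cM_nonneg E_constants_nonneg K_ge_6
    by (intro mult_right_mono add_mono mult_left_mono) auto
  finally show ?thesis
    by (simp add: cD_def algebra_simps)
qed

lemma abs_rpart_minus_le:
  "\<bar>rpart_minus chi0 K p s (\<lambda>y. Rerr p mu y s) y\<bar>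
     \<le> (cD + 4 * cR * (kherm_weight 0 + kherm_weight 1 + kherm_weight 2)) * s powr (- gam) * (1 + \<bar>y\<bar>^3)"
  if gam: "gam \<le> 2 * \<beta> + 1" and s: "s \<ge> 1"
proof -
  have s0: "s > 0" using s by simp
  have coef_le: "\<bar>rcoef chi0 K p s (\<lambda>y. Rerr p mu y s) m\<bar> \<le> cR * kherm_weight m * s powr (- gam)" for m
    using abs_rcoef_le[OF s, of m] decay_le_powr_gamma(1)[OF gam s] cR_nonneg kherm_weight_nonneg[of m]
    by (meson mult_left_mono mult_nonneg_nonneg order_trans)
  have "rpart_minus chi0 K p s (\<lambda>y. Rerr p mu y s) y
      = chi y s * R y s - rcoef chi0 K p s (\<lambda>y. Rerr p mu y s) 0 * herm 0 y
        - rcoef chi0 K p s (\<lambda>y. Rerr p mu y s) 1 * herm 1 y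
        - rcoef chi0 K p s (\<lambda>y. Rerr p mu y s) 2 * herm 2 y"
    by (simp add: rpart_minus_def rpart_b_def Rerr_eq[OF s0] numeral_2_eq_2)
  then have "\<bar>rpart_minus chi0 K p s (\<lambda>y. Rerr p mu y s) y\<bar> \<le> \<bar>chi y s * R y s\<bar>
      + \<bar>rcoef chi0 K p s (\<lambda>y. Rerr p mu y s) 0 * herm 0 y\<bar>
      + \<bar>rcoef chi0 K p s (\<lambda>y. Rerr p mu y s) 1 * herm 1 y\<bar>
      + \<bar>rcoef chi0 K p s (\<lambda>y. Rerr p mu y s) 2 * herm 2 y\<bar>"
    by linarith
  also have "\<dots> \<le> cD * s powr (- gam) * (1 + \<bar>y\<bar>^3)
      + cR * kherm_weight 0 * s powr (- gam) * (4 * (1 + \<bar>y\<bar>^3))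
      + cR * kherm_weight 1 * s powr (- gam) * (4 * (1 + \<bar>y\<bar>^3))
      + cR * kherm_weight 2 * s powr (- gam) * (4 * (1 + \<bar>y\<bar>^3))"
    using abs_cutoff_R_le[OF gam s, of y] abs_mult_herm_le[OF coef_le, of 0 0 y]
      abs_mult_herm_le[OF coef_le, of 1 1 y] abs_mult_herm_le[OF coef_le, of 2 2 y]
    by (intro add_mono) assumption+
  also have "\<dots> = (cD + 4 * cR * (kherm_weight 0 + kherm_weight 1 + kherm_weight 2))
      * s powr (- gam) * (1 + \<bar>y\<bar>^3)"
    by (simp add: algebra_simps)
  finally show ?thesis .
qed

text \<open>The summand \<open>(cR * kherm_weight 2)^2\<close> makes \<open>cR * kherm_weight 2 \<le> \<surd>cTheta\<close>, as needed for
  the bound on the second coefficient.\<close>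
definition "cTheta = 1 + cRinv + cD + 5 * cR * (kherm_weight 0 + kherm_weight 1 + kherm_weight 2)
   + (cR * kherm_weight 2)^2"

lemma cTheta_bounds:
  "1 \<le> cTheta" "cRinv \<le> cTheta" "cD + 4 * cR * (kherm_weight 0 + kherm_weight 1 + kherm_weight 2) \<le> cTheta"
  "cR * kherm_weight 0 \<le> cTheta" "cR * kherm_weight 1 \<le> cTheta" "cR * kherm_weight 2 \<le> cTheta"
  "cR * kherm_weight 2 \<le> sqrt cTheta"
  unfolding cTheta_def using cRinv_nonneg cD_nonneg cR_nonneg kherm_weight_nonneg[of 0]
    kherm_weight_nonneg[of 1] kherm_weight_nonneg[of 2]
  by (auto simp: algebra_simps intro!: real_le_rsqrt)

lemma abs_rcoef2_le_powr:
  "\<bar>rcoef chi0 K p s (\<lambda>y. Rerr p mu y s) 2\<bar> \<le> cR * kherm_weight 2 * s powr (- 4 * \<beta>)" if "s \<ge> 1"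
  using abs_rcoef2_le[OF that] sigma_sq_eq_powr[of s] that by simp

lemma Rerr_in_vartheta: "(\<lambda>y. Rerr p mu y s) \<in> vartheta chi0 K p gam cTheta s"
  if gam: "gam \<le> 2 * \<beta> + 1" and s: "s \<ge> 1"
proof (rule vartheta_memI)
  have s0: "s > 0" using s by simp
  show "(\<lambda>y. Rerr p mu y s) \<in> borel_measurable lborel"
    using borel_measurable_R[of s] by (simp add: Rerr_eq[OF s0])
  show "0 \<le> chi y s" "chi y s \<le> 1" for y
    using cutoff_range[OF s0] by auto
  show "\<bar>Rerr p mu y s\<bar> \<le> cTheta^2 * s powr (- (gam - 3 * \<beta>))" for y
  proof -
    have "\<bar>Rerr p mu y s\<bar> \<le> cRinv * s powr (- 1)"
      using abs_R_le_inverse[OF s, of y] s0 by (simp add: Rerr_eq powr_minus divide_inverse)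
    also have "\<dots> \<le> cTheta^2 * s powr (- (gam - 3 * \<beta>))"
    proof (rule mult_mono)
      have "cTheta * 1 \<le> cTheta * cTheta"
        using cTheta_bounds(1) by (intro mult_left_mono) auto
      then show "cRinv \<le> cTheta^2"
        using cTheta_bounds(2) by (simp add: power2_eq_square)
      show "s powr (- 1) \<le> s powr (- (gam - 3 * \<beta>))"
        using s gam beta_bounds by (intro powr_mono) auto
    qed auto
    finally show ?thesis .
  qed
  show "\<bar>rpart_minus chi0 K p s (\<lambda>y. Rerr p mu y s) y\<bar> \<le> cTheta * s powr (- gam) * (1 + \<bar>y\<bar>^3)" for y
    using abs_rpart_minus_le[OF gam s, of y] cTheta_bounds(3)
    by (smt (verit) mult_right_mono powr_ge_zero zero_le_power abs_ge_zero)
  show "\<bar>rcoef chi0 K p s (\<lambda>y. Rerr p mu y s) 0\<bar> \<le> cTheta * s powr (- (2 * \<beta> + 1))"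
    using abs_rcoef_le[OF s, of 0] cTheta_bounds(4) tau_eq_powr[OF s0]
    by (metis mult_right_mono order_trans powr_ge_zero)
  show "\<bar>rcoef chi0 K p s (\<lambda>y. Rerr p mu y s) 1\<bar> \<le> cTheta * s powr (- (2 * \<beta> + 1))"
    using abs_rcoef_le[OF s, of 1] cTheta_bounds(5) tau_eq_powr[OF s0]
    by (metis mult_right_mono order_trans powr_ge_zero)
  have "cR * kherm_weight 2 * s powr (- 4 * \<beta>) \<le> sqrt cTheta * s powr (- (4 * \<beta> - 1))"
    using cTheta_bounds(1,7) cR_nonneg kherm_weight_nonneg[of 2] s by (intro mult_mono powr_mono) auto
  then show "\<bar>rcoef chi0 K p s (\<lambda>y. Rerr p mu y s) 2\<bar> \<le> sqrt cTheta * s powr (- (4 * \<beta> - 1))"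
    using abs_rcoef2_le_powr[OF s] by linarith
qed

lemma abs_rcoef2_le_cTheta: "\<bar>rcoef chi0 K p s (\<lambda>y. Rerr p mu y s) 2\<bar> \<le> cTheta / s powr (4 * \<beta>)"
  if "s \<ge> 1"
proof -
  have "\<bar>rcoef chi0 K p s (\<lambda>y. Rerr p mu y s) 2\<bar> \<le> cR * kherm_weight 2 * s powr (- 4 * \<beta>)"
    by (rule abs_rcoef2_le_powr[OF that])
  also have "\<dots> \<le> cTheta * s powr (- 4 * \<beta>)"
    using cTheta_bounds(6) by (intro mult_right_mono) auto
  also have "\<dots> = cTheta / s powr (4 * \<beta>)"
    by (simp add: powr_minus divide_inverse)
  finally show ?thesis .
qed

end

theorem lemma4p8:
  fixes p mu K gam :: real and chi0 :: "real \<Rightarrow> real"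
  assumes "p > 3" and "mu > 0" and "K \<ge> 6"
    and "smooth_real chi0"
    and "\<forall>x\<ge>0. 0 \<le> chi0 x \<and> chi0 x \<le> 1"
    and "\<forall>x y. 0 \<le> x \<and> x \<le> y \<longrightarrow> chi0 y \<le> chi0 x"
    and "\<forall>x. 0 \<le> x \<and> x \<le> 1 \<longrightarrow> chi0 x = 1"
    and "\<forall>x>2. chi0 x = 0"
    and "3 * betaexp p < gam" and "gam < min (5 * betaexp p - 1) (2 * betaexp p + 1)"
  shows "\<exists>s11 C. C \<ge> 1 \<and> (\<forall>s\<ge>s11.
           (\<lambda>y. Rerr p mu y s) \<in> vartheta chi0 K p gam C s \<and>
           \<bar>rcoef chi0 K p s (\<lambda>y. Rerr p mu y s) 2\<bar> \<le> C / s powr (4 * betaexp p) \<and>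
           Linf_le (\<lambda>y. Vpot p mu y s) C \<and>
           (\<forall>y. \<bar>Vpot p mu y s\<bar> \<le> C * (1 + y^2) / s powr (2 * betaexp p)))"
proof -
  have "continuous_on UNIV chi0"
    using assms(4) unfolding smooth_real_def by (metis funpow_0 differentiable_imp_continuous_on)
  then interpret blowup_profile_cutoff p mu chi0 K
    using assms(1-3,5,7,8) by unfold_locales auto
  have gam: "gam \<le> 2 * betaexp p + 1"
    using assms(10) by simp
  define C where "C = max cTheta cV"
  have C: "1 \<le> C" "cTheta \<le> C" "cV \<le> C"
    using cTheta_bounds(1) by (auto simp: C_def)
  show ?thesis
  proof (rule exI[of _ 1], rule exI[of _ C], intro conjI allI impI)
    fix s y :: real
    assume s: "1 \<le> s"
    have "vartheta chi0 K p gam cTheta s \<subseteq> vartheta chi0 K p gam C s"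
      using cTheta_bounds(1) C(2) by (intro vartheta_mono) auto
    then show "(\<lambda>y. Rerr p mu y s) \<in> vartheta chi0 K p gam C s"
      using Rerr_in_vartheta[OF gam s] by blast
    show "\<bar>rcoef chi0 K p s (\<lambda>y. Rerr p mu y s) 2\<bar> \<le> C / s powr (4 * betaexp p)"
      using abs_rcoef2_le_cTheta[OF s] divide_right_mono[OF C(2), of "s powr (4 * betaexp p)"] by simp
    show "Linf_le (\<lambda>y. Vpot p mu y s) C"
      using Linf_le_mono[OF Linf_le_Vpot[OF s] C(3)] .
    show "\<bar>Vpot p mu y s\<bar> \<le> C * (1 + y^2) / s powr (2 * betaexp p)"
      using abs_Vpot_le_powr[OF s, of y] C(3) by (simp add: divide_right_mono mult_right_mono order_trans)
  qed (fact C(1))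
qed

end
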